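(* Let $\kappa>0$ and $\mathcal{L}f=\frac{\kappa}{2}f''$. Let $\sigma:\mathbf{R}\to\mathbf{R}$ be Lipschitz with $\sigma(0)=0$ and $\mathrm{L}_\sigma:=\inf_x|\sigma(x)/x|>0$. Let $u_0:\mathbf{R}\to\mathbf{R}_+$ be bounded, lower semicontinuous, and strictly positive on a set of positive Lebesgue measure, and let $u$ be the mild solution of $\partial_tu_t(x)=\frac{\kappa}{2}\partial_x^2u_t(x)+\sigma(u_t(x))\,\partial^2_{tx}W(t,x)$ with initial datum $u_0$. If $\alpha,\beta>0$ satisfy $$\Big(\alpha-\frac{\mathrm{L}_\sigma^2}{4\pi}\Big)^2<\frac{\mathrm{L}_\sigma^4}{16\pi^2}-\kappa\beta,$$ then $\mathcal{M}_{\alpha,\beta}(u)=\infty$.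
   Context: $W$ is a two-parameter Brownian sheet. The mild solution is the predictable random field $u$ with $u_t(x)=(P_tu_0)(x)+\int_{[0,t]\times\mathbf{R}}p_{t-s}(y-x)\sigma(u_s(y))\,W(ds\,dy)$, where $p_t(x)=(2\pi\kappa t)^{-1/2}e^{-x^2/(2\kappa t)}$ and $(P_tf)(x)=\int p_t(y-x)f(y)\,dy$. For a predictable random field $v$ and $\alpha,\beta>0$, $\mathcal{M}_{\alpha,\beta}(v):=\Big[\int_0^\infty e^{-\beta t}\int_{\{x:|x|\ge\alpha t\}}\mathrm{E}(|v_t(x)|^2)\,dx\,dt\Big]^{1/2}$. *)

theory Defs
  imports "HOL-Probability.Probability"
begin

definition heat_kernel :: "real \<Rightarrow> real \<Rightarrow> real \<Rightarrow> real" where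
  "heat_kernel \<kappa> t x = exp (- (x\<^sup>2) / (2 * \<kappa> * t)) / sqrt (2 * pi * \<kappa> * t)"

definition heat_semigroup :: "real \<Rightarrow> real \<Rightarrow> (real \<Rightarrow> real) \<Rightarrow> real \<Rightarrow> real" where
  "heat_semigroup \<kappa> t f x = (\<integral>y. heat_kernel \<kappa> t (y - x) * f y \<partial>lborel)"

definition lsc :: "(real \<Rightarrow> real) \<Rightarrow> bool" where
  "lsc f \<longleftrightarrow> (\<forall>x c. c < f x \<longrightarrow> (\<forall>\<^sub>F y in at x. c < f y))"

definition L_sigma :: "(real \<Rightarrow> real) \<Rightarrow> real" where
  "L_sigma \<sigma> = Inf {\<bar>\<sigma> x / x\<bar> | x. x \<noteq> 0}"

text \<open>M: underlying probability space; F: filtration indexed by time;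
  W A: the white-noise mass of a Borel set A of [0,oo) x R with finite Lebesgue measure.\<close>
definition finite_ts_set :: "(real \<times> real) set \<Rightarrow> bool" where
  "finite_ts_set A \<longleftrightarrow> A \<in> sets (lborel \<Otimes>\<^sub>M lborel) \<and> A \<subseteq> {0..} \<times> UNIV
      \<and> emeasure (lborel \<Otimes>\<^sub>M lborel) A < \<infinity>"

definition white_noise ::
  "'a measure \<Rightarrow> (real \<Rightarrow> 'a measure) \<Rightarrow> ((real \<times> real) set \<Rightarrow> 'a \<Rightarrow> real) \<Rightarrow> bool" where
  "white_noise M F W \<longleftrightarrow>
     prob_space M \<and>
     filtration (space M) F \<and> (\<forall>t. sets (F t) \<subseteq> sets M) \<and>
     (\<forall>A. finite_ts_set A \<longrightarrow>
        W A \<in> borel_measurable M \<and>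
        (measure (lborel \<Otimes>\<^sub>M lborel) A > 0 \<longrightarrow>
            distributed M lborel (W A)
              (normal_density 0 (sqrt (measure (lborel \<Otimes>\<^sub>M lborel) A)))) \<and>
        (measure (lborel \<Otimes>\<^sub>M lborel) A = 0 \<longrightarrow> (AE \<omega> in M. W A \<omega> = 0))) \<and>
     (\<forall>A B. finite_ts_set A \<longrightarrow> finite_ts_set B \<longrightarrow> A \<inter> B = {} \<longrightarrow>
        (AE \<omega> in M. W (A \<union> B) \<omega> = W A \<omega> + W B \<omega>)) \<and>
     (\<forall>I (A :: nat \<Rightarrow> (real \<times> real) set). finite I \<longrightarrow> (\<forall>i\<in>I. finite_ts_set (A i)) \<longrightarrow>
        disjoint_family_on A I \<longrightarrow>
        prob_space.indep_vars M (\<lambda>_. borel) (\<lambda>i. W (A i)) I) \<and>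
     (\<forall>t A. finite_ts_set A \<longrightarrow> A \<subseteq> {0..t} \<times> UNIV \<longrightarrow> W A \<in> borel_measurable (F t)) \<and>
     (\<forall>t A. finite_ts_set A \<longrightarrow> A \<subseteq> {t<..} \<times> UNIV \<longrightarrow>
        prob_space.indep_sets M (\<lambda>i. if i then sets (F t) else sets (vimage_algebra (space M) (W A) borel))
           UNIV)"

definition predictable_sa :: "'a measure \<Rightarrow> (real \<Rightarrow> 'a measure) \<Rightarrow> (real \<times> real \<times> 'a) measure" where
  "predictable_sa M F = sigma ({0..} \<times> UNIV \<times> space M)
     ({{a<..b} \<times> A \<times> B | a b A B. 0 \<le> a \<and> a \<le> b \<and> A \<in> sets borel \<and> B \<in> sets (F a)} \<union>
      {{0} \<times> A \<times> B | A B. A \<in> sets borel \<and> B \<in> sets (F 0)})"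

definition predictable :: "'a measure \<Rightarrow> (real \<Rightarrow> 'a measure) \<Rightarrow> (real \<Rightarrow> real \<Rightarrow> 'a \<Rightarrow> real) \<Rightarrow> bool" where
  "predictable M F v \<longleftrightarrow> (\<lambda>(t, x, \<omega>). v t x \<omega>) \<in> borel_measurable (predictable_sa M F)"

definition L2_norm_sq :: "'a measure \<Rightarrow> (real \<Rightarrow> real \<Rightarrow> 'a \<Rightarrow> real) \<Rightarrow> ennreal" where
  "L2_norm_sq M v = (\<integral>\<^sup>+ \<omega>. (\<integral>\<^sup>+ z. indicator ({0..} \<times> UNIV) z * ennreal ((v (fst z) (snd z) \<omega>)\<^sup>2)
        \<partial>(lborel \<Otimes>\<^sub>M lborel)) \<partial>M)"

definition simple_integrand ::
  "(real \<Rightarrow> 'a measure) \<Rightarrow> (('a \<Rightarrow> real) \<times> real \<times> real \<times> real set) list \<Rightarrow> bool" where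
  "simple_integrand F ps \<longleftrightarrow> (\<forall>(X, a, b, A) \<in> set ps.
      0 \<le> a \<and> a \<le> b \<and> A \<in> sets borel \<and> bounded A \<and> X \<in> borel_measurable (F a) \<and> bounded (range X))"

definition simple_eval ::
  "(('a \<Rightarrow> real) \<times> real \<times> real \<times> real set) list \<Rightarrow> real \<Rightarrow> real \<Rightarrow> 'a \<Rightarrow> real" where
  "simple_eval ps s y \<omega> = (\<Sum>(X, a, b, A) \<leftarrow> ps. X \<omega> * indicator ({a<..b} \<times> A) (s, y))"

definition simple_stoch_int ::
  "((real \<times> real) set \<Rightarrow> 'a \<Rightarrow> real) \<Rightarrow> (('a \<Rightarrow> real) \<times> real \<times> real \<times> real set) list \<Rightarrow> 'a \<Rightarrow> real" where
  "simple_stoch_int W ps \<omega> = (\<Sum>(X, a, b, A) \<leftarrow> ps. X \<omega> * W ({a<..b} \<times> A) \<omega>)"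

definition walsh_integral ::
  "'a measure \<Rightarrow> (real \<Rightarrow> 'a measure) \<Rightarrow> ((real \<times> real) set \<Rightarrow> 'a \<Rightarrow> real)
     \<Rightarrow> (real \<Rightarrow> real \<Rightarrow> 'a \<Rightarrow> real) \<Rightarrow> ('a \<Rightarrow> real) \<Rightarrow> bool" where
  "walsh_integral M F W f Y \<longleftrightarrow>
     predictable M F f \<and> L2_norm_sq M f < \<infinity> \<and> Y \<in> borel_measurable M \<and>
     (\<exists>ps :: nat \<Rightarrow> (('a \<Rightarrow> real) \<times> real \<times> real \<times> real set) list.
        (\<forall>n. simple_integrand F (ps n)) \<and>
        (\<lambda>n. L2_norm_sq M (\<lambda>s y \<omega>. f s y \<omega> - simple_eval (ps n) s y \<omega>)) \<longlonglongrightarrow> 0 \<and>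
        (\<lambda>n. \<integral>\<^sup>+ \<omega>. ennreal ((simple_stoch_int W (ps n) \<omega> - Y \<omega>)\<^sup>2) \<partial>M) \<longlonglongrightarrow> 0)"

definition mild_solution ::
  "'a measure \<Rightarrow> (real \<Rightarrow> 'a measure) \<Rightarrow> ((real \<times> real) set \<Rightarrow> 'a \<Rightarrow> real) \<Rightarrow> real
     \<Rightarrow> (real \<Rightarrow> real) \<Rightarrow> (real \<Rightarrow> real) \<Rightarrow> (real \<Rightarrow> real \<Rightarrow> 'a \<Rightarrow> real) \<Rightarrow> bool" where
  "mild_solution M F W \<kappa> \<sigma> u0 u \<longleftrightarrow>
     predictable M F u \<and>
     (\<forall>x. \<forall>\<omega>\<in>space M. u 0 x \<omega> = u0 x) \<and>
     (\<forall>t>0. \<forall>x. \<exists>Y.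
        walsh_integral M F W
          (\<lambda>s y \<omega>. indicator {0..t} s * heat_kernel \<kappa> (t - s) (y - x) * \<sigma> (u s y \<omega>)) Y \<and>
        (AE \<omega> in M. u t x \<omega> = heat_semigroup \<kappa> t u0 x + Y \<omega>))"

definition M_norm :: "'a measure \<Rightarrow> real \<Rightarrow> real \<Rightarrow> (real \<Rightarrow> real \<Rightarrow> 'a \<Rightarrow> real) \<Rightarrow> ennreal" where
  "M_norm M \<alpha> \<beta> v =
     (let I = (\<integral>\<^sup>+ t. indicator {0..} t * ennreal (exp (- \<beta> * t)) *
                 (\<integral>\<^sup>+ x. indicator {x. \<bar>x\<bar> \<ge> \<alpha> * t} x *
                      (\<integral>\<^sup>+ \<omega>. ennreal ((v t x \<omega>)\<^sup>2) \<partial>M) \<partial>lborel) \<partial>lborel)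
      in if I = \<infinity> then \<infinity> else ennreal (sqrt (enn2real I)))"

end

theory Submission
  imports Defs
begin

text \<open>Write \<open>G(t, x) = E |u\<^sub>t(x)|\<^sup>2\<close>. Ito's isometry (only the lower bound
  \<open>E |\<integral> f dW|\<^sup>2 \<ge> E \<integral>\<integral> f\<^sup>2\<close> is needed) together with \<open>|\<sigma>(v)| \<ge> L\<^sub>\<sigma> |v|\<close> gives the renewal
  inequality \<open>G(t, x) \<ge> (P\<^sub>t u\<^sub>0)(x)\<^sup>2 + L\<^sub>\<sigma>\<^sup>2 \<integral>\<^sub>0\<^sup>t \<integral> p\<^sub>t\<^sub>-\<^sub>s(y - x)\<^sup>2 G(s, y) dy ds\<close>.
  Integrate it against \<open>e\<^sup>-\<^sup>\<beta>\<^sup>t\<close> over the cone \<open>|x| \<ge> \<alpha> t\<close>: since the cone is stable under adding points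
  of the half-cone \<open>{(r, z). z \<ge> \<alpha> r}\<close> (or its mirror image), the weighted integral \<open>I = M\<^sub>\<alpha>\<^sub>,\<^sub>\<beta>(u)\<^sup>2\<close>
  satisfies \<open>k I \<le> I\<close> with
  \<open>k = L\<^sub>\<sigma>\<^sup>2 \<integral>\<^sub>0\<^sup>\<infinity> \<integral>\<^sub>\<alpha>\<^sub>r\<^sup>\<infinity> e\<^sup>-\<^sup>\<beta>\<^sup>r p\<^sub>r(z)\<^sup>2 dz dr = (L\<^sub>\<sigma>\<^sup>2 / 2\<pi>) \<integral>\<^sub>\<alpha>\<^sup>\<infinity> dw / (\<kappa>\<beta> + w\<^sup>2)\<close>, and the
  hypothesis on \<open>\<alpha>, \<beta>\<close> (equivalently \<open>\<alpha>\<^sup>2 + \<kappa>\<beta> < \<alpha> L\<^sub>\<sigma>\<^sup>2 / 2\<pi>\<close>) guarantees \<open>k > 1\<close>.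
  Hence \<open>I\<close> is \<open>0\<close> or \<open>\<infinity>\<close>, and \<open>I > 0\<close> because \<open>P\<^sub>t u\<^sub>0 > 0\<close> everywhere.\<close>

section \<open>White noise\<close>

abbreviation plane_measure :: "(real \<times> real) set \<Rightarrow> real" where
  "plane_measure \<equiv> measure (lborel \<Otimes>\<^sub>M lborel)"

lemma finite_ts_set_subset:
  "finite_ts_set B \<Longrightarrow> A \<subseteq> B \<Longrightarrow> A \<in> sets (lborel \<Otimes>\<^sub>M lborel) \<Longrightarrow> finite_ts_set A"
  unfolding finite_ts_set_def using emeasure_mono[of A B "lborel \<Otimes>\<^sub>M lborel"]
  by (auto simp: less_le_trans order_le_less_trans)

lemma finite_ts_set_Un: "finite_ts_set A \<Longrightarrow> finite_ts_set B \<Longrightarrow> finite_ts_set (A \<union> B)"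
  unfolding finite_ts_set_def using emeasure_subadditive[of A "lborel \<Otimes>\<^sub>M lborel" B]
  by (auto simp: ennreal_add_less_top intro: order_le_less_trans)

lemma finite_ts_set_sets: "finite_ts_set A \<Longrightarrow> A \<in> sets (lborel \<Otimes>\<^sub>M lborel)"
  by (simp add: finite_ts_set_def)

lemma finite_ts_set_emeasure_finite: "finite_ts_set A \<Longrightarrow> emeasure (lborel \<Otimes>\<^sub>M lborel) A \<noteq> \<infinity>"
  by (auto simp: finite_ts_set_def)

lemma finite_ts_set_rectangle:
  assumes "0 \<le> a" "A \<in> sets borel" "bounded A"
  shows "finite_ts_set ({a<..b} \<times> A)"
proof -
  have "emeasure (lborel \<Otimes>\<^sub>M lborel) ({a<..b} \<times> A) = emeasure lborel {a<..b} * emeasure lborel A"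
    using assms by (intro lborel.emeasure_pair_measure_Times) auto
  moreover have "emeasure lborel {a<..b} < \<infinity>" by (intro emeasure_bounded_finite) simp
  moreover have "emeasure lborel A < \<infinity>" using assms by (intro emeasure_bounded_finite)
  ultimately have "emeasure (lborel \<Otimes>\<^sub>M lborel) ({a<..b} \<times> A) < \<infinity>"
    by (simp add: ennreal_mult_less_top)
  then show ?thesis using assms unfolding finite_ts_set_def by auto
qed

lemma abs_mult_le_sum_squares: "\<bar>(x::real) * y\<bar> \<le> x\<^sup>2 + y\<^sup>2"
proof -
  have "2 * (\<bar>x\<bar> * \<bar>y\<bar>) \<le> x\<^sup>2 + y\<^sup>2"
    using sum_squares_bound[of "\<bar>x\<bar>" "\<bar>y\<bar>"] by (simp add: mult.assoc)
  moreover have "0 \<le> \<bar>x\<bar> * \<bar>y\<bar>" by simp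
  ultimately show ?thesis unfolding abs_mult by linarith
qed

locale white_noise_space = prob_space M for M :: "'a measure" +
  fixes F :: "real \<Rightarrow> 'a measure" and W :: "(real \<times> real) set \<Rightarrow> 'a \<Rightarrow> real"
  assumes noise: "white_noise M F W"
begin

lemma filtration_F: "filtration (space M) F"
  using noise by (simp add: white_noise_def)

lemma sets_F_subset: "sets (F t) \<subseteq> sets M"
  using noise by (simp add: white_noise_def)

lemma measurable_F_imp_M: "X \<in> borel_measurable (F t) \<Longrightarrow> X \<in> borel_measurable M"
  by (rule measurable_from_subalg[of _ "F t"])
    (auto simp: subalgebra_def sets_F_subset filtration.space_F[OF filtration_F])

lemma measurable_F_mono: "X \<in> borel_measurable (F s) \<Longrightarrow> s \<le> t \<Longrightarrow> X \<in> borel_measurable (F t)"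
  by (rule measurable_from_subalg[of _ "F s"])
    (auto simp: subalgebra_def filtration.sets_F_mono[OF filtration_F] filtration.space_F[OF filtration_F])

lemma W_measurable: "finite_ts_set A \<Longrightarrow> W A \<in> borel_measurable M"
  using noise by (simp add: white_noise_def)

lemma W_adapted: "finite_ts_set A \<Longrightarrow> A \<subseteq> {0..t} \<times> UNIV \<Longrightarrow> W A \<in> borel_measurable (F t)"
  using noise by (simp add: white_noise_def)

lemma W_additive_AE:
  "finite_ts_set A \<Longrightarrow> finite_ts_set B \<Longrightarrow> A \<inter> B = {} \<Longrightarrow>
   AE \<omega> in M. W (A \<union> B) \<omega> = W A \<omega> + W B \<omega>"
  using noise by (simp add: white_noise_def)

lemma W_moments:
  assumes A: "finite_ts_set A"
  shows "integrable M (W A)" "integrable M (\<lambda>\<omega>. (W A \<omega>)\<^sup>2)"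
    "expectation (W A) = 0" "expectation (\<lambda>\<omega>. (W A \<omega>)\<^sup>2) = plane_measure A"
proof -
  have m: "W A \<in> borel_measurable M" using W_measurable[OF A] .
  have "(plane_measure A > 0 \<longrightarrow> distributed M lborel (W A) (normal_density 0 (sqrt (plane_measure A)))) \<and>
        (plane_measure A = 0 \<longrightarrow> (AE \<omega> in M. W A \<omega> = 0))"
    using noise A by (simp add: white_noise_def)
  then consider
      (gaussian) "plane_measure A > 0" "distributed M lborel (W A) (normal_density 0 (sqrt (plane_measure A)))"
    | (null) "plane_measure A = 0" "AE \<omega> in M. W A \<omega> = 0"
    using measure_nonneg[of "lborel \<Otimes>\<^sub>M lborel" A] by linarith
  then have "integrable M (W A) \<and> integrable M (\<lambda>\<omega>. (W A \<omega>)\<^sup>2) \<and>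
    expectation (W A) = 0 \<and> expectation (\<lambda>\<omega>. (W A \<omega>)\<^sup>2) = plane_measure A"
  proof cases
    case gaussian
    let ?s = "sqrt (plane_measure A)"
    have s: "?s > 0" using gaussian by simp
    have "integrable M (W A)"
      using distributed_integrable[OF gaussian(2), of "\<lambda>x. x"] integrable_normal_moment_nz_1[OF s] by auto
    moreover have "integrable M (\<lambda>\<omega>. (W A \<omega>)\<^sup>2)"
      using distributed_integrable[OF gaussian(2), of "\<lambda>x. x\<^sup>2"]
        integrable_normal_moment[OF s, where k=2 and \<mu>=0] by auto
    moreover have "expectation (W A) = 0"
      using distributed_integral[OF gaussian(2), of "\<lambda>x. x"] integral_normal_moment_nz_1[OF s, of 0] by simp
    moreover have "expectation (\<lambda>\<omega>. (W A \<omega>)\<^sup>2) = plane_measure A"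
      using distributed_integral[OF gaussian(2), of "\<lambda>x. x\<^sup>2"]
        integral_normal_moment_even[OF s, where k=1 and \<mu>=0] s gaussian(1)
      by simp
    ultimately show ?thesis by simp
  next
    case null
    have sq: "AE \<omega> in M. (W A \<omega>)\<^sup>2 = 0" using null(2) by eventually_elim simp
    show ?thesis
      using integrable_cong_AE[OF m _ null(2)] integrable_cong_AE[OF _ _ sq]
        integral_cong_AE[OF m _ null(2)] integral_cong_AE[OF _ _ sq] m null(1)
      by simp
  qed
  then show "integrable M (W A)" "integrable M (\<lambda>\<omega>. (W A \<omega>)\<^sup>2)"
    "expectation (W A) = 0" "expectation (\<lambda>\<omega>. (W A \<omega>)\<^sup>2) = plane_measure A" by auto
qed

lemma W_indep_past:
  assumes G: "finite_ts_set G" "G \<subseteq> {m<..} \<times> UNIV"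
    and V: "V \<in> borel_measurable (F m)" and h: "h \<in> borel_measurable borel"
  shows "indep_var borel V borel (\<lambda>\<omega>. h (W G \<omega>))"
  unfolding indep_var_def indep_vars_def2
proof
  have I: "indep_sets (\<lambda>i. if i then sets (F m) else sets (vimage_algebra (space M) (W G) borel)) UNIV"
    using noise G by (simp add: white_noise_def)
  have WG: "W G \<in> borel_measurable M" using W_measurable[OF G(1)] .
  show "\<forall>i\<in>UNIV. random_variable (case_bool borel borel i) (case_bool V (\<lambda>\<omega>. h (W G \<omega>)) i)"
    using measurable_F_imp_M[OF V] WG h by (auto split: bool.split)
  show "indep_sets (\<lambda>i. {case_bool V (\<lambda>\<omega>. h (W G \<omega>)) i -` A \<inter> space M |A.
      A \<in> sets (case_bool borel borel i)}) UNIV"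
  proof (rule indep_sets_mono_sets[OF I])
    fix i :: bool
    show "{case_bool V (\<lambda>\<omega>. h (W G \<omega>)) i -` A \<inter> space M |A. A \<in> sets (case_bool borel borel i)}
       \<subseteq> (if i then sets (F m) else sets (vimage_algebra (space M) (W G) borel))"
    proof (cases i)
      case True
      have "V -` A \<inter> space M \<in> sets (F m)" if "A \<in> sets borel" for A
        using measurable_sets[OF V that] by (simp add: filtration.space_F[OF filtration_F])
      then show ?thesis using True by auto
    next
      case False
      have "(\<lambda>\<omega>. h (W G \<omega>)) -` A \<inter> space M \<in> sets (vimage_algebra (space M) (W G) borel)"
        if "A \<in> sets borel" for A
      proof -
        have "(\<lambda>\<omega>. h (W G \<omega>)) -` A \<inter> space M = W G -` (h -` A \<inter> space borel) \<inter> space M" by auto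
        moreover have "h -` A \<inter> space borel \<in> sets borel" using h that by (rule measurable_sets)
        ultimately show ?thesis
          by (subst sets_vimage_algebra2) (auto simp: measurable_space[OF WG])
      qed
      then show ?thesis using False by auto
    qed
  qed
qed

lemma integrable_mult_W_W:
  assumes Z: "Z \<in> borel_measurable M" "\<And>\<omega>. \<bar>Z \<omega>\<bar> \<le> B"
    and G: "finite_ts_set G" "finite_ts_set G'"
  shows "integrable M (\<lambda>\<omega>. Z \<omega> * W G \<omega> * W G' \<omega>)"
proof (rule Bochner_Integration.integrable_bound)
  show "integrable M (\<lambda>\<omega>. B * ((W G \<omega>)\<^sup>2 + (W G' \<omega>)\<^sup>2))"
    using W_moments[OF G(1)] W_moments[OF G(2)] by auto
  show "(\<lambda>\<omega>. Z \<omega> * W G \<omega> * W G' \<omega>) \<in> borel_measurable M"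
    using Z W_measurable[OF G(1)] W_measurable[OF G(2)] by auto
  show "AE \<omega> in M. norm (Z \<omega> * W G \<omega> * W G' \<omega>) \<le> norm (B * ((W G \<omega>)\<^sup>2 + (W G' \<omega>)\<^sup>2))"
  proof (rule AE_I2)
    fix \<omega>
    have B: "0 \<le> B" using Z(2)[of \<omega>] by simp
    have "\<bar>Z \<omega>\<bar> * \<bar>W G \<omega> * W G' \<omega>\<bar> \<le> B * ((W G \<omega>)\<^sup>2 + (W G' \<omega>)\<^sup>2)"
      using Z(2)[of \<omega>] B abs_mult_le_sum_squares by (intro mult_mono) auto
    then show "norm (Z \<omega> * W G \<omega> * W G' \<omega>) \<le> norm (B * ((W G \<omega>)\<^sup>2 + (W G' \<omega>)\<^sup>2))"
      using B by (simp add: abs_mult mult.assoc)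
  qed
qed

lemma integrable_mult_W:
  assumes Z: "Z \<in> borel_measurable M" "\<And>\<omega>. \<bar>Z \<omega>\<bar> \<le> B" and G: "finite_ts_set G"
  shows "integrable M (\<lambda>\<omega>. Z \<omega> * W G \<omega>)"
proof (rule Bochner_Integration.integrable_bound[where f="\<lambda>\<omega>. B * \<bar>W G \<omega>\<bar>"])
  have B: "0 \<le> B" using Z(2)[of undefined] by simp
  show "integrable M (\<lambda>\<omega>. B * \<bar>W G \<omega>\<bar>)" using W_moments(1)[OF G] by auto
  show "(\<lambda>\<omega>. Z \<omega> * W G \<omega>) \<in> borel_measurable M" using Z(1) W_measurable[OF G] by auto
  show "AE \<omega> in M. norm (Z \<omega> * W G \<omega>) \<le> norm (B * \<bar>W G \<omega>\<bar>)"
    using Z(2) B by (auto intro!: AE_I2 simp: abs_mult intro: mult_right_mono)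
qed

lemma expectation_mult_W_future:
  assumes G: "finite_ts_set G" "G \<subseteq> {m<..} \<times> UNIV"
    and V: "V \<in> borel_measurable (F m)" "integrable M V"
  shows "expectation (\<lambda>\<omega>. V \<omega> * W G \<omega>) = 0"
  using indep_var_lebesgue_integral[OF W_indep_past[OF G V(1), of "\<lambda>x. x"] V(2)] W_moments[OF G(1)]
  by simp

lemma expectation_mult_W_sq_future:
  assumes G: "finite_ts_set G" "G \<subseteq> {m<..} \<times> UNIV"
    and Z: "Z \<in> borel_measurable (F m)" "\<And>\<omega>. \<bar>Z \<omega>\<bar> \<le> B"
  shows "expectation (\<lambda>\<omega>. Z \<omega> * W G \<omega> * W G \<omega>) = expectation Z * plane_measure G"
proof -
  have "integrable M Z" using measurable_F_imp_M[OF Z(1)] Z(2) by (intro integrable_const_bound) auto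
  from indep_var_lebesgue_integral[OF W_indep_past[OF G Z(1), of "\<lambda>x. x\<^sup>2"] this] W_moments[OF G(1)]
  show ?thesis by (simp add: power2_eq_square mult.assoc)
qed

text \<open>Polarisation: expanding \<open>W(G \<union> G')\<^sup>2\<close> by additivity isolates the cross term.\<close>

lemma expectation_mult_W_disjoint_future:
  assumes G: "finite_ts_set G" "G \<subseteq> {m<..} \<times> UNIV" "finite_ts_set G'" "G' \<subseteq> {m<..} \<times> UNIV"
    and disj: "G \<inter> G' = {}"
    and Z: "Z \<in> borel_measurable (F m)" "\<And>\<omega>. \<bar>Z \<omega>\<bar> \<le> B"
  shows "expectation (\<lambda>\<omega>. Z \<omega> * W G \<omega> * W G' \<omega>) = 0"
proof -
  have U: "finite_ts_set (G \<union> G')" "G \<union> G' \<subseteq> {m<..} \<times> UNIV" using G finite_ts_set_Un by auto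
  have ZM: "Z \<in> borel_measurable M" using measurable_F_imp_M[OF Z(1)] .
  have ae: "AE \<omega> in M. Z \<omega> * W (G \<union> G') \<omega> * W (G \<union> G') \<omega> =
     Z \<omega> * W G \<omega> * W G \<omega> + 2 * (Z \<omega> * W G \<omega> * W G' \<omega>) + Z \<omega> * W G' \<omega> * W G' \<omega>"
    using W_additive_AE[OF G(1) G(3) disj] by eventually_elim (simp add: algebra_simps)
  have "expectation (\<lambda>\<omega>. Z \<omega> * W (G \<union> G') \<omega> * W (G \<union> G') \<omega>) =
     expectation (\<lambda>\<omega>. Z \<omega> * W G \<omega> * W G \<omega> + 2 * (Z \<omega> * W G \<omega> * W G' \<omega>) + Z \<omega> * W G' \<omega> * W G' \<omega>)"
    by (rule integral_cong_AE)
      (use ae ZM W_measurable[OF U(1)] W_measurable[OF G(1)] W_measurable[OF G(3)] in auto)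
  also have "\<dots> = expectation (\<lambda>\<omega>. Z \<omega> * W G \<omega> * W G \<omega>) + 2 * expectation (\<lambda>\<omega>. Z \<omega> * W G \<omega> * W G' \<omega>)
      + expectation (\<lambda>\<omega>. Z \<omega> * W G' \<omega> * W G' \<omega>)"
    using integrable_mult_W_W[OF ZM Z(2) G(1) G(1)] integrable_mult_W_W[OF ZM Z(2) G(1) G(3)]
      integrable_mult_W_W[OF ZM Z(2) G(3) G(3)]
    by simp
  finally have "expectation Z * plane_measure (G \<union> G') = expectation Z * plane_measure G
      + 2 * expectation (\<lambda>\<omega>. Z \<omega> * W G \<omega> * W G' \<omega>) + expectation Z * plane_measure G'"
    using expectation_mult_W_sq_future[OF U Z] expectation_mult_W_sq_future[OF G(1,2) Z]
      expectation_mult_W_sq_future[OF G(3,4) Z] by simp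
  moreover have "plane_measure (G \<union> G') = plane_measure G + plane_measure G'"
    using G(1,3) disj
    by (intro measure_Union finite_ts_set_emeasure_finite finite_ts_set_sets)
  ultimately show ?thesis by (simp add: algebra_simps)
qed

lemma expectation_mult_W_W_future:
  assumes G: "finite_ts_set G1" "G1 \<subseteq> {m<..} \<times> UNIV" "finite_ts_set G2" "G2 \<subseteq> {m<..} \<times> UNIV"
    and Z: "Z \<in> borel_measurable (F m)" "\<And>\<omega>. \<bar>Z \<omega>\<bar> \<le> B"
  shows "expectation (\<lambda>\<omega>. Z \<omega> * W G1 \<omega> * W G2 \<omega>) = expectation Z * plane_measure (G1 \<inter> G2)"
proof -
  define H1 where "H1 = G1 - G2"
  define H2 where "H2 = G1 \<inter> G2"
  define H3 where "H3 = G2 - G1"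
  have H: "finite_ts_set H1" "finite_ts_set H2" "finite_ts_set H3"
    unfolding H1_def H2_def H3_def using G finite_ts_set_sets[OF G(1)] finite_ts_set_sets[OF G(3)]
    by (auto intro: finite_ts_set_subset)
  have Hs: "H1 \<subseteq> {m<..} \<times> UNIV" "H2 \<subseteq> {m<..} \<times> UNIV" "H3 \<subseteq> {m<..} \<times> UNIV"
    unfolding H1_def H2_def H3_def using G by auto
  have split: "G1 = H1 \<union> H2" "H1 \<inter> H2 = {}" "G2 = H3 \<union> H2" "H3 \<inter> H2 = {}" "H1 \<inter> H3 = {}" "H2 \<inter> H3 = {}"
    unfolding H1_def H2_def H3_def by auto
  have ZM: "Z \<in> borel_measurable M" using measurable_F_imp_M[OF Z(1)] .
  have ae: "AE \<omega> in M. Z \<omega> * W G1 \<omega> * W G2 \<omega> = Z \<omega> * W H1 \<omega> * W H3 \<omega> + Z \<omega> * W H1 \<omega> * W H2 \<omega>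
      + Z \<omega> * W H2 \<omega> * W H3 \<omega> + Z \<omega> * W H2 \<omega> * W H2 \<omega>"
    using W_additive_AE[OF H(1) H(2) split(2)] W_additive_AE[OF H(3) H(2) split(4)]
    by eventually_elim (simp add: split(1)[symmetric] split(3)[symmetric] algebra_simps)
  have "expectation (\<lambda>\<omega>. Z \<omega> * W G1 \<omega> * W G2 \<omega>) = expectation (\<lambda>\<omega>. Z \<omega> * W H1 \<omega> * W H3 \<omega>
      + Z \<omega> * W H1 \<omega> * W H2 \<omega> + Z \<omega> * W H2 \<omega> * W H3 \<omega> + Z \<omega> * W H2 \<omega> * W H2 \<omega>)"
    by (rule integral_cong_AE) (use ae ZM W_measurable H G in auto)
  also have "\<dots> = expectation (\<lambda>\<omega>. Z \<omega> * W H1 \<omega> * W H3 \<omega>) + expectation (\<lambda>\<omega>. Z \<omega> * W H1 \<omega> * W H2 \<omega>)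
     + expectation (\<lambda>\<omega>. Z \<omega> * W H2 \<omega> * W H3 \<omega>) + expectation (\<lambda>\<omega>. Z \<omega> * W H2 \<omega> * W H2 \<omega>)"
    using integrable_mult_W_W[OF ZM Z(2)] H by simp
  also have "\<dots> = expectation Z * plane_measure H2"
    using expectation_mult_W_disjoint_future[OF H(1) Hs(1) H(3) Hs(3) split(5) Z]
      expectation_mult_W_disjoint_future[OF H(1) Hs(1) H(2) Hs(2) split(2) Z]
      expectation_mult_W_disjoint_future[OF H(2) Hs(2) H(3) Hs(3) split(6) Z]
      expectation_mult_W_sq_future[OF H(2) Hs(2) Z]
    by simp
  finally show ?thesis by (simp add: H2_def)
qed

text \<open>The part of the earlier rectangle lying before \<open>m\<close> is \<open>F m\<close>-measurable, so it can be
  absorbed into the coefficient.\<close>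

lemma expectation_mult_W_rectangles:
  assumes a: "0 \<le> a" "a \<le> m" and A: "A \<in> sets borel" "bounded A" "A' \<in> sets borel" "bounded A'"
    and Z: "Z \<in> borel_measurable (F m)" "\<And>\<omega>. \<bar>Z \<omega>\<bar> \<le> B"
  shows "expectation (\<lambda>\<omega>. Z \<omega> * W ({a<..b} \<times> A) \<omega> * W ({m<..b'} \<times> A') \<omega>)
     = expectation Z * plane_measure ({a<..b} \<times> A \<inter> {m<..b'} \<times> A')"
proof -
  define R where "R = {a<..b} \<times> A"
  define Rm where "Rm = {a<..min b m} \<times> A"
  define Rp where "Rp = {m<..b} \<times> A"
  define R' where "R' = {m<..b'} \<times> A'"
  have fin: "finite_ts_set R" "finite_ts_set Rm" "finite_ts_set Rp" "finite_ts_set R'"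
    unfolding R_def Rm_def Rp_def R'_def using a A by (auto intro!: finite_ts_set_rectangle)
  have disj: "Rm \<inter> Rp = {}" unfolding Rm_def Rp_def using a by auto
  have "{a<..b} = {a<..min b m} \<union> {m<..b}" using a by (auto simp: min_def)
  then have R_Un: "R = Rm \<union> Rp" unfolding R_def Rm_def Rp_def by (simp add: Sigma_Un_distrib1)
  have ZM: "Z \<in> borel_measurable M" using measurable_F_imp_M[OF Z(1)] .
  have WR: "W R \<in> borel_measurable M" "W Rm \<in> borel_measurable M" "W Rp \<in> borel_measurable M"
    "W R' \<in> borel_measurable M" using W_measurable fin by auto
  have ae: "AE \<omega> in M. Z \<omega> * W R \<omega> * W R' \<omega> = (Z \<omega> * W Rm \<omega>) * W R' \<omega> + Z \<omega> * W Rp \<omega> * W R' \<omega>"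
    using W_additive_AE[OF fin(2,3) disj] by eventually_elim (simp add: R_Un algebra_simps)
  have "expectation (\<lambda>\<omega>. Z \<omega> * W R \<omega> * W R' \<omega>) =
      expectation (\<lambda>\<omega>. (Z \<omega> * W Rm \<omega>) * W R' \<omega> + Z \<omega> * W Rp \<omega> * W R' \<omega>)"
    by (rule integral_cong_AE) (use ae ZM WR in auto)
  also have "\<dots> = expectation (\<lambda>\<omega>. (Z \<omega> * W Rm \<omega>) * W R' \<omega>) + expectation (\<lambda>\<omega>. Z \<omega> * W Rp \<omega> * W R' \<omega>)"
    using integrable_mult_W_W[OF ZM Z(2) fin(2) fin(4)] integrable_mult_W_W[OF ZM Z(2) fin(3) fin(4)]
    by (simp add: mult.assoc)
  also have "expectation (\<lambda>\<omega>. (Z \<omega> * W Rm \<omega>) * W R' \<omega>) = 0"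
  proof (rule expectation_mult_W_future)
    show "finite_ts_set R'" "R' \<subseteq> {m<..} \<times> UNIV" using fin by (auto simp: R'_def)
    have "W Rm \<in> borel_measurable (F m)" using fin(2) a by (intro W_adapted) (auto simp: Rm_def)
    then show "(\<lambda>\<omega>. Z \<omega> * W Rm \<omega>) \<in> borel_measurable (F m)" using Z(1) by simp
    show "integrable M (\<lambda>\<omega>. Z \<omega> * W Rm \<omega>)" using integrable_mult_W[OF ZM Z(2) fin(2)] .
  qed
  also have "expectation (\<lambda>\<omega>. Z \<omega> * W Rp \<omega> * W R' \<omega>) = expectation Z * plane_measure (Rp \<inter> R')"
    using fin by (intro expectation_mult_W_W_future[OF _ _ _ _ Z]) (auto simp: Rp_def R'_def)
  also have "Rp \<inter> R' = R \<inter> R'" unfolding Rp_def R_def R'_def using a by auto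
  finally show ?thesis by (simp add: R_def R'_def)
qed

end

section \<open>Simple integrands\<close>

type_synonym 'a simple_term = "('a \<Rightarrow> real) \<times> real \<times> real \<times> real set"

definition simple_coeff :: "'a simple_term \<Rightarrow> 'a \<Rightarrow> real" where
  "simple_coeff p = fst p"

definition simple_start :: "'a simple_term \<Rightarrow> real" where
  "simple_start p = fst (snd p)"

definition simple_rect :: "'a simple_term \<Rightarrow> (real \<times> real) set" where
  "simple_rect p = {fst (snd p)<..fst (snd (snd p))} \<times> snd (snd (snd p))"

lemma sum_list_map_eq_sum_nth: "sum_list (map f xs) = (\<Sum>i<length xs. f (xs ! i))"
  by (simp add: sum_list_sum_nth atLeast0LessThan)

lemma simple_stoch_int_eq_sum:
  "simple_stoch_int W ps \<omega> = (\<Sum>i<length ps. simple_coeff (ps!i) \<omega> * W (simple_rect (ps!i)) \<omega>)"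
  unfolding simple_stoch_int_def sum_list_map_eq_sum_nth
  by (intro sum.cong) (auto simp: simple_coeff_def simple_rect_def split: prod.split)

lemma simple_eval_eq_sum:
  "simple_eval ps s y \<omega> = (\<Sum>i<length ps. simple_coeff (ps!i) \<omega> * indicator (simple_rect (ps!i)) (s, y))"
  unfolding simple_eval_def sum_list_map_eq_sum_nth
  by (intro sum.cong) (auto simp: simple_coeff_def simple_rect_def split: prod.split)

lemma simple_integrandD:
  assumes "simple_integrand F ps" "p \<in> set ps"
  shows "simple_coeff p \<in> borel_measurable (F (simple_start p))"
    "\<exists>B. \<forall>\<omega>. \<bar>simple_coeff p \<omega>\<bar> \<le> B" "finite_ts_set (simple_rect p)"
    "simple_rect p \<subseteq> {simple_start p<..} \<times> UNIV" "0 \<le> simple_start p"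
    "\<exists>b A. simple_rect p = {simple_start p<..b} \<times> A \<and> A \<in> sets borel \<and> bounded A"
proof -
  obtain X a b A where p: "p = (X, a, b, A)" by (cases p) auto
  have "0 \<le> a" "a \<le> b" "A \<in> sets borel" "bounded A" "X \<in> borel_measurable (F a)"
    and X: "bounded (range X)"
    using assms unfolding simple_integrand_def p by auto
  moreover have "\<exists>B. \<forall>\<omega>. \<bar>X \<omega>\<bar> \<le> B" using X unfolding bounded_iff by auto
  ultimately show "simple_coeff p \<in> borel_measurable (F (simple_start p))"
    "\<exists>B. \<forall>\<omega>. \<bar>simple_coeff p \<omega>\<bar> \<le> B" "finite_ts_set (simple_rect p)"
    "simple_rect p \<subseteq> {simple_start p<..} \<times> UNIV" "0 \<le> simple_start p"
    "\<exists>b A. simple_rect p = {simple_start p<..b} \<times> A \<and> A \<in> sets borel \<and> bounded A"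
    by (auto simp: p simple_coeff_def simple_start_def simple_rect_def intro!: finite_ts_set_rectangle)
qed

context white_noise_space
begin

lemma simple_coeff_product_bounded:
  assumes ps: "simple_integrand F ps" and p: "p \<in> set ps" and q: "q \<in> set ps"
  obtains B where "\<And>\<omega>. \<bar>simple_coeff p \<omega> * simple_coeff q \<omega>\<bar> \<le> B"
proof -
  obtain B1 where B1: "\<And>\<omega>. \<bar>simple_coeff p \<omega>\<bar> \<le> B1" using simple_integrandD(2)[OF ps p] by auto
  obtain B2 where B2: "\<And>\<omega>. \<bar>simple_coeff q \<omega>\<bar> \<le> B2" using simple_integrandD(2)[OF ps q] by auto
  show thesis
  proof (rule that)
    show "\<bar>simple_coeff p \<omega> * simple_coeff q \<omega>\<bar> \<le> B1 * B2" for \<omega>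
      unfolding abs_mult using B1[of \<omega>] B2[of \<omega>] by (intro mult_mono) auto
  qed
qed

lemma simple_term_products:
  assumes ps: "simple_integrand F ps" and p: "p \<in> set ps" and q: "q \<in> set ps"
  shows "integrable M (\<lambda>\<omega>. simple_coeff p \<omega> * simple_coeff q \<omega> * W (simple_rect p) \<omega> * W (simple_rect q) \<omega>)"
    "expectation (\<lambda>\<omega>. simple_coeff p \<omega> * simple_coeff q \<omega> * W (simple_rect p) \<omega> * W (simple_rect q) \<omega>)
      = expectation (\<lambda>\<omega>. simple_coeff p \<omega> * simple_coeff q \<omega>) * plane_measure (simple_rect p \<inter> simple_rect q)"
proof -
  note P = simple_integrandD[OF ps p] and Q = simple_integrandD[OF ps q]
  obtain B where B: "\<And>\<omega>. \<bar>simple_coeff p \<omega> * simple_coeff q \<omega>\<bar> \<le> B"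
    using simple_coeff_product_bounded[OF ps p q] by blast
  have ZM: "(\<lambda>\<omega>. simple_coeff p \<omega> * simple_coeff q \<omega>) \<in> borel_measurable M"
    using measurable_F_imp_M[OF P(1)] measurable_F_imp_M[OF Q(1)] by simp
  show "integrable M (\<lambda>\<omega>. simple_coeff p \<omega> * simple_coeff q \<omega> * W (simple_rect p) \<omega> * W (simple_rect q) \<omega>)"
    using integrable_mult_W_W[OF ZM B P(3) Q(3)] .
  have sym: "expectation (\<lambda>\<omega>. simple_coeff p' \<omega> * simple_coeff q' \<omega> * W (simple_rect p') \<omega> * W (simple_rect q') \<omega>)
      = expectation (\<lambda>\<omega>. simple_coeff p' \<omega> * simple_coeff q' \<omega>) * plane_measure (simple_rect p' \<inter> simple_rect q')"
    if pq: "{p', q'} = {p, q}" and le: "simple_start p' \<le> simple_start q'" for p' q'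
  proof -
    have p': "p' \<in> set ps" and q': "q' \<in> set ps" using pq p q by (auto simp: doubleton_eq_iff)
    note P' = simple_integrandD[OF ps p'] and Q' = simple_integrandD[OF ps q']
    obtain b A where R: "simple_rect p' = {simple_start p'<..b} \<times> A" "A \<in> sets borel" "bounded A"
      using P'(6) by blast
    obtain b' A' where R': "simple_rect q' = {simple_start q'<..b'} \<times> A'" "A' \<in> sets borel" "bounded A'"
      using Q'(6) by blast
    have bound: "\<bar>simple_coeff p' \<omega> * simple_coeff q' \<omega>\<bar> \<le> B" for \<omega>
      using B[of \<omega>] pq by (auto simp: doubleton_eq_iff abs_mult mult.commute)
    have "(\<lambda>\<omega>. simple_coeff p' \<omega> * simple_coeff q' \<omega>) \<in> borel_measurable (F (simple_start q'))"
      using measurable_F_mono[OF P'(1) le] Q'(1) by simp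
    then show ?thesis
      unfolding R(1) R'(1) by (rule expectation_mult_W_rectangles[OF P'(5) le R(2,3) R'(2,3) _ bound])
  qed
  show "expectation (\<lambda>\<omega>. simple_coeff p \<omega> * simple_coeff q \<omega> * W (simple_rect p) \<omega> * W (simple_rect q) \<omega>)
      = expectation (\<lambda>\<omega>. simple_coeff p \<omega> * simple_coeff q \<omega>) * plane_measure (simple_rect p \<inter> simple_rect q)"
  proof (cases "simple_start p \<le> simple_start q")
    case True
    then show ?thesis using sym[of p q] by simp
  next
    case False
    then show ?thesis using sym[of q p]
      by (simp add: insert_commute Int_commute mult.commute mult.left_commute)
  qed
qed

lemma simple_stoch_int_moments:
  assumes ps: "simple_integrand F ps"
  shows "integrable M (simple_stoch_int W ps)" "expectation (simple_stoch_int W ps) = 0"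
    "integrable M (\<lambda>\<omega>. (simple_stoch_int W ps \<omega>)\<^sup>2)"
    "expectation (\<lambda>\<omega>. (simple_stoch_int W ps \<omega>)\<^sup>2) = (\<Sum>i<length ps. \<Sum>j<length ps.
       expectation (\<lambda>\<omega>. simple_coeff (ps!i) \<omega> * simple_coeff (ps!j) \<omega>)
       * plane_measure (simple_rect (ps!i) \<inter> simple_rect (ps!j)))"
proof -
  have mem: "i < length ps \<Longrightarrow> ps ! i \<in> set ps" for i by simp
  have single_term: "integrable M (\<lambda>\<omega>. simple_coeff p \<omega> * W (simple_rect p) \<omega>)"
    "expectation (\<lambda>\<omega>. simple_coeff p \<omega> * W (simple_rect p) \<omega>) = 0" if p: "p \<in> set ps" for p
  proof -
    note P = simple_integrandD[OF ps p]
    obtain B where B: "\<And>\<omega>. \<bar>simple_coeff p \<omega>\<bar> \<le> B" using P(2) by auto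
    have ZM: "simple_coeff p \<in> borel_measurable M" using measurable_F_imp_M[OF P(1)] .
    show "integrable M (\<lambda>\<omega>. simple_coeff p \<omega> * W (simple_rect p) \<omega>)"
      using integrable_mult_W[OF ZM B P(3)] .
    have "integrable M (simple_coeff p)" using ZM B by (intro integrable_const_bound) auto
    then show "expectation (\<lambda>\<omega>. simple_coeff p \<omega> * W (simple_rect p) \<omega>) = 0"
      by (rule expectation_mult_W_future[OF P(3,4,1)])
  qed
  have eq: "simple_stoch_int W ps = (\<lambda>\<omega>. \<Sum>i<length ps. simple_coeff (ps!i) \<omega> * W (simple_rect (ps!i)) \<omega>)"
    by (rule ext) (rule simple_stoch_int_eq_sum)
  show "integrable M (simple_stoch_int W ps)" unfolding eq using single_term(1)[OF mem] by auto
  show "expectation (simple_stoch_int W ps) = 0" unfolding eq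
    using single_term[OF mem] by (simp add: Bochner_Integration.integral_sum)
  have sq: "(\<lambda>\<omega>. (simple_stoch_int W ps \<omega>)\<^sup>2) = (\<lambda>\<omega>. \<Sum>i<length ps. \<Sum>j<length ps.
      simple_coeff (ps!i) \<omega> * simple_coeff (ps!j) \<omega> * W (simple_rect (ps!i)) \<omega> * W (simple_rect (ps!j)) \<omega>)"
    unfolding eq power2_eq_square sum_product by (simp add: ac_simps)
  note products = simple_term_products[OF ps mem mem]
  show "integrable M (\<lambda>\<omega>. (simple_stoch_int W ps \<omega>)\<^sup>2)" unfolding sq
    using products(1) by (intro Bochner_Integration.integrable_sum) auto
  show "expectation (\<lambda>\<omega>. (simple_stoch_int W ps \<omega>)\<^sup>2) = (\<Sum>i<length ps. \<Sum>j<length ps.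
       expectation (\<lambda>\<omega>. simple_coeff (ps!i) \<omega> * simple_coeff (ps!j) \<omega>)
       * plane_measure (simple_rect (ps!i) \<inter> simple_rect (ps!j)))"
    unfolding sq using products
    by (subst Bochner_Integration.integral_sum,
        auto intro!: Bochner_Integration.integrable_sum sum.cong Bochner_Integration.integral_sum)
qed

lemma simple_eval_measurable:
  assumes ps: "simple_integrand F ps"
  shows "(\<lambda>(\<omega>, z). simple_eval ps (fst z) (snd z) \<omega>) \<in> borel_measurable (M \<Otimes>\<^sub>M (lborel \<Otimes>\<^sub>M lborel))"
proof -
  have "(\<lambda>x. simple_coeff (ps ! i) (fst x) * indicator (simple_rect (ps ! i)) (snd x))
      \<in> borel_measurable (M \<Otimes>\<^sub>M (lborel \<Otimes>\<^sub>M lborel))" if "i < length ps" for i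
  proof -
    have p: "ps ! i \<in> set ps" using that by simp
    have "simple_coeff (ps ! i) \<in> borel_measurable M"
      using measurable_F_imp_M[OF simple_integrandD(1)[OF ps p]] .
    moreover have "simple_rect (ps ! i) \<in> sets (lborel \<Otimes>\<^sub>M lborel)"
      using finite_ts_set_sets[OF simple_integrandD(3)[OF ps p]] .
    ultimately show ?thesis by measurable
  qed
  moreover have "(\<lambda>(\<omega>, z). simple_eval ps (fst z) (snd z) \<omega>) =
      (\<lambda>x. \<Sum>i<length ps. simple_coeff (ps!i) (fst x) * indicator (simple_rect (ps!i)) (snd x))"
    by (auto simp: simple_eval_eq_sum)
  ultimately show ?thesis by (auto intro!: borel_measurable_sum simp only:)
qed

lemma simple_eval_space_integral:
  assumes ps: "simple_integrand F ps"
  defines "Q \<equiv> \<lambda>\<omega>. \<Sum>i<length ps. \<Sum>j<length ps. simple_coeff (ps!i) \<omega> * simple_coeff (ps!j) \<omega>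
      * plane_measure (simple_rect (ps!i) \<inter> simple_rect (ps!j))"
  shows "(\<integral>\<^sup>+ z. indicator ({0..} \<times> UNIV) z * ennreal ((simple_eval ps (fst z) (snd z) \<omega>)\<^sup>2)
      \<partial>(lborel \<Otimes>\<^sub>M lborel)) = ennreal (Q \<omega>)"
    "0 \<le> Q \<omega>"
proof -
  have mem: "i < length ps \<Longrightarrow> ps ! i \<in> set ps" for i by simp
  define h where "h z = (\<Sum>i<length ps. simple_coeff (ps!i) \<omega> * indicator (simple_rect (ps!i)) z)\<^sup>2"
    for z :: "real \<times> real"
  have sub: "i < length ps \<Longrightarrow> simple_rect (ps!i) \<subseteq> {0..} \<times> UNIV" for i
    using simple_integrandD(4,5)[OF ps mem] by fastforce
  have restrict: "indicator ({0..} \<times> UNIV) z * ennreal ((simple_eval ps (fst z) (snd z) \<omega>)\<^sup>2) = ennreal (h z)"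
    for z
  proof (cases "z \<in> {0..} \<times> UNIV")
    case True then show ?thesis by (simp add: h_def simple_eval_eq_sum)
  next
    case False
    then have "z \<notin> simple_rect (ps!i)" if "i < length ps" for i using sub[OF that] by auto
    then show ?thesis using False by (simp add: h_def)
  qed
  have h_expand: "h = (\<lambda>z. \<Sum>i<length ps. \<Sum>j<length ps. (simple_coeff (ps!i) \<omega> * simple_coeff (ps!j) \<omega>)
      * indicator (simple_rect (ps!i) \<inter> simple_rect (ps!j)) z)"
    unfolding h_def power2_eq_square sum_product indicator_inter_arith
    by (intro ext sum.cong refl) (simp add: ac_simps)
  have fin: "finite_ts_set (simple_rect (ps!i) \<inter> simple_rect (ps!j))" if "i < length ps" "j < length ps" for i j
    using simple_integrandD(3)[OF ps mem] that
    by (intro finite_ts_set_subset[OF _ Int_lower1] sets.Int finite_ts_set_sets) auto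
  have terms: "integrable (lborel \<Otimes>\<^sub>M lborel) (\<lambda>z. c * indicator (simple_rect (ps!i) \<inter> simple_rect (ps!j)) z)"
    if "i < length ps" "j < length ps" for c :: real and i j
    using fin[OF that] unfolding finite_ts_set_def by (intro integrable_mult_right) (auto simp: integrable_indicator_iff)
  have h_integrable: "integrable (lborel \<Otimes>\<^sub>M lborel) h"
    unfolding h_expand using terms by (intro Bochner_Integration.integrable_sum) auto
  have h_integral: "integral\<^sup>L (lborel \<Otimes>\<^sub>M lborel) h = Q \<omega>"
    unfolding h_expand Q_def
    apply (subst Bochner_Integration.integral_sum)
     apply (intro Bochner_Integration.integrable_sum terms; simp)
    apply (intro sum.cong refl)
    apply (subst Bochner_Integration.integral_sum)
     apply (intro terms; simp)
    apply (simp add: space_pair_measure)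
    done
  have "0 \<le> integral\<^sup>L (lborel \<Otimes>\<^sub>M lborel) h"
    by (rule Bochner_Integration.integral_nonneg) (simp add: h_def)
  then show "0 \<le> Q \<omega>" unfolding h_integral .
  show "(\<integral>\<^sup>+ z. indicator ({0..} \<times> UNIV) z * ennreal ((simple_eval ps (fst z) (snd z) \<omega>)\<^sup>2)
      \<partial>(lborel \<Otimes>\<^sub>M lborel)) = ennreal (Q \<omega>)"
    unfolding restrict by (subst nn_integral_eq_integral[OF h_integrable]) (auto simp: h_def h_integral)
qed

lemma simple_ito_isometry:
  assumes ps: "simple_integrand F ps"
  shows "L2_norm_sq M (simple_eval ps) = (\<integral>\<^sup>+\<omega>. ennreal ((simple_stoch_int W ps \<omega>)\<^sup>2) \<partial>M)"
proof -
  have mem: "i < length ps \<Longrightarrow> ps ! i \<in> set ps" for i by simp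
  define Q where "Q \<omega> = (\<Sum>i<length ps. \<Sum>j<length ps. simple_coeff (ps!i) \<omega> * simple_coeff (ps!j) \<omega>
      * plane_measure (simple_rect (ps!i) \<inter> simple_rect (ps!j)))" for \<omega>
  have coeffs: "integrable M (\<lambda>\<omega>. simple_coeff (ps!i) \<omega> * simple_coeff (ps!j) \<omega>)"
    if ij: "i < length ps" "j < length ps" for i j
  proof -
    obtain B where "\<And>\<omega>. \<bar>simple_coeff (ps!i) \<omega> * simple_coeff (ps!j) \<omega>\<bar> \<le> B"
      using simple_coeff_product_bounded[OF ps mem[OF ij(1)] mem[OF ij(2)]] by blast
    moreover have "(\<lambda>\<omega>. simple_coeff (ps!i) \<omega> * simple_coeff (ps!j) \<omega>) \<in> borel_measurable M"
      using measurable_F_imp_M[OF simple_integrandD(1)[OF ps mem]] ij by simp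
    ultimately show ?thesis by (intro integrable_const_bound) auto
  qed
  have Q_integrable: "integrable M Q"
    unfolding Q_def using coeffs by (intro Bochner_Integration.integrable_sum integrable_mult_left) auto
  have "expectation Q = expectation (\<lambda>\<omega>. (simple_stoch_int W ps \<omega>)\<^sup>2)"
    unfolding simple_stoch_int_moments(4)[OF ps] Q_def using coeffs
    by (subst Bochner_Integration.integral_sum,
        auto intro!: Bochner_Integration.integrable_sum sum.cong Bochner_Integration.integral_sum)
  moreover have "L2_norm_sq M (simple_eval ps) = (\<integral>\<^sup>+\<omega>. ennreal (Q \<omega>) \<partial>M)"
    unfolding L2_norm_sq_def Q_def by (simp add: simple_eval_space_integral[OF ps])
  moreover have "(\<integral>\<^sup>+\<omega>. ennreal (Q \<omega>) \<partial>M) = ennreal (expectation Q)"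
    using simple_eval_space_integral(2)[OF ps] by (intro nn_integral_eq_integral[OF Q_integrable]) (auto simp: Q_def)
  ultimately show ?thesis
    using simple_stoch_int_moments(3)[OF ps] by (simp add: nn_integral_eq_integral)
qed

end

section \<open>Walsh integrals\<close>

lemma ennreal_square_add_le:
  assumes e: "0 < (e::real)"
  shows "ennreal ((x + y)\<^sup>2) \<le> ennreal (1 + e) * ennreal (x\<^sup>2) + ennreal (1 + 1/e) * ennreal (y\<^sup>2)"
proof -
  have "0 \<le> (e*x - y)\<^sup>2 / e" using e by simp
  also have "(e*x - y)\<^sup>2 / e = e * x\<^sup>2 - 2*x*y + y\<^sup>2 / e" using e
    by (simp add: power2_eq_square field_simps)
  finally have "(x + y)\<^sup>2 \<le> (1 + e) * x\<^sup>2 + (1 + 1/e) * y\<^sup>2"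
    by (simp add: power2_eq_square algebra_simps add_divide_distrib)
  then show ?thesis
    using e by (simp add: ennreal_mult[symmetric] ennreal_plus[symmetric] ennreal_leI del: ennreal_plus)
qed

lemma nn_integral_square_add_le:
  fixes w :: "'b \<Rightarrow> ennreal" and g h :: "'b \<Rightarrow> real"
  assumes [measurable]: "w \<in> borel_measurable N" "g \<in> borel_measurable N" "h \<in> borel_measurable N"
    and e: "0 < e"
  shows "(\<integral>\<^sup>+z. w z * ennreal ((g z + h z)\<^sup>2) \<partial>N) \<le>
     ennreal (1 + e) * (\<integral>\<^sup>+z. w z * ennreal ((g z)\<^sup>2) \<partial>N) + ennreal (1 + 1/e) * (\<integral>\<^sup>+z. w z * ennreal ((h z)\<^sup>2) \<partial>N)"
proof -
  have "(\<integral>\<^sup>+z. w z * ennreal ((g z + h z)\<^sup>2) \<partial>N) \<le>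
     (\<integral>\<^sup>+z. ennreal (1 + e) * (w z * ennreal ((g z)\<^sup>2)) + ennreal (1 + 1/e) * (w z * ennreal ((h z)\<^sup>2)) \<partial>N)"
  proof (rule nn_integral_mono)
    fix z
    have "w z * ennreal ((g z + h z)\<^sup>2)
        \<le> w z * (ennreal (1 + e) * ennreal ((g z)\<^sup>2) + ennreal (1 + 1/e) * ennreal ((h z)\<^sup>2))"
      by (rule mult_left_mono[OF ennreal_square_add_le[OF e]]) simp
    then show "w z * ennreal ((g z + h z)\<^sup>2)
        \<le> ennreal (1 + e) * (w z * ennreal ((g z)\<^sup>2)) + ennreal (1 + 1/e) * (w z * ennreal ((h z)\<^sup>2))"
      by (simp add: distrib_left ac_simps)
  qed
  also have "\<dots> = ennreal (1 + e) * (\<integral>\<^sup>+z. w z * ennreal ((g z)\<^sup>2) \<partial>N)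
      + ennreal (1 + 1/e) * (\<integral>\<^sup>+z. w z * ennreal ((h z)\<^sup>2) \<partial>N)"
    by (simp add: nn_integral_add nn_integral_cmult)
  finally show ?thesis .
qed

lemma sigma_finite_lborel_lborel: "sigma_finite_measure (lborel \<Otimes>\<^sub>M lborel :: (real \<times> real) measure)"
  by (rule sigma_finite_pair_measure) (rule sigma_finite_lborel)+

lemma L2_norm_sq_add_le:
  fixes g h :: "real \<Rightarrow> real \<Rightarrow> 'a \<Rightarrow> real"
  assumes [measurable]: "(\<lambda>(\<omega>, z). g (fst z) (snd z) \<omega>) \<in> borel_measurable (M \<Otimes>\<^sub>M (lborel \<Otimes>\<^sub>M lborel))"
    "(\<lambda>(\<omega>, z). h (fst z) (snd z) \<omega>) \<in> borel_measurable (M \<Otimes>\<^sub>M (lborel \<Otimes>\<^sub>M lborel))"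
    and e: "0 < e"
  shows "L2_norm_sq M (\<lambda>s y \<omega>. g s y \<omega> + h s y \<omega>) \<le>
    ennreal (1 + e) * L2_norm_sq M g + ennreal (1 + 1/e) * L2_norm_sq M h"
proof -
  interpret LL: sigma_finite_measure "lborel \<Otimes>\<^sub>M lborel :: (real \<times> real) measure"
    by (rule sigma_finite_lborel_lborel)
  let ?w = "\<lambda>z::real \<times> real. indicator ({0..} \<times> UNIV) z :: ennreal"
  let ?N = "lborel \<Otimes>\<^sub>M lborel :: (real \<times> real) measure"
  have "L2_norm_sq M (\<lambda>s y \<omega>. g s y \<omega> + h s y \<omega>)
      \<le> (\<integral>\<^sup>+\<omega>. ennreal (1 + e) * (\<integral>\<^sup>+z. ?w z * ennreal ((g (fst z) (snd z) \<omega>)\<^sup>2) \<partial>?N)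
          + ennreal (1 + 1/e) * (\<integral>\<^sup>+z. ?w z * ennreal ((h (fst z) (snd z) \<omega>)\<^sup>2) \<partial>?N) \<partial>M)"
    unfolding L2_norm_sq_def
  proof (rule nn_integral_mono)
    fix \<omega> assume "\<omega> \<in> space M"
    then have "(\<lambda>z. g (fst z) (snd z) \<omega>) \<in> borel_measurable ?N" "(\<lambda>z. h (fst z) (snd z) \<omega>) \<in> borel_measurable ?N"
      by measurable
    then show "(\<integral>\<^sup>+z. ?w z * ennreal ((g (fst z) (snd z) \<omega> + h (fst z) (snd z) \<omega>)\<^sup>2) \<partial>?N) \<le>
        ennreal (1 + e) * (\<integral>\<^sup>+z. ?w z * ennreal ((g (fst z) (snd z) \<omega>)\<^sup>2) \<partial>?N)
        + ennreal (1 + 1/e) * (\<integral>\<^sup>+z. ?w z * ennreal ((h (fst z) (snd z) \<omega>)\<^sup>2) \<partial>?N)"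
      by (intro nn_integral_square_add_le e) simp_all
  qed
  also have "\<dots> = ennreal (1 + e) * L2_norm_sq M g + ennreal (1 + 1/e) * L2_norm_sq M h"
    unfolding L2_norm_sq_def by (subst nn_integral_add) (auto simp: nn_integral_cmult)
  finally show ?thesis .
qed

lemma (in prob_space) square_expectation_le_nn_integral:
  assumes "integrable M D"
  shows "ennreal ((expectation D)\<^sup>2) \<le> (\<integral>\<^sup>+\<omega>. ennreal ((D \<omega>)\<^sup>2) \<partial>M)"
proof (cases "integrable M (\<lambda>\<omega>. (D \<omega>)\<^sup>2)")
  case True
  have "(expectation D)\<^sup>2 \<le> expectation (\<lambda>\<omega>. (D \<omega>)\<^sup>2)"
    using variance_eq[OF assms True] variance_positive[of D] by simp
  then show ?thesis
    by (subst nn_integral_eq_integral[OF True]) (auto intro: ennreal_leI)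
next
  case False
  then have "(\<integral>\<^sup>+\<omega>. ennreal ((D \<omega>)\<^sup>2) \<partial>M) = \<infinity>"
    using assms by (auto simp: integrable_iff_bounded top_unique not_less)
  then show ?thesis by simp
qed

lemma square_integrable_of_nn_integral_diff_finite:
  assumes [measurable]: "X \<in> borel_measurable M" "Y \<in> borel_measurable M"
    and X: "integrable M (\<lambda>\<omega>. (X \<omega>)\<^sup>2)" and diff: "(\<integral>\<^sup>+\<omega>. ennreal ((X \<omega> - Y \<omega>)\<^sup>2) \<partial>M) < \<infinity>"
  shows "integrable M (\<lambda>\<omega>. (Y \<omega>)\<^sup>2)"
proof (rule Bochner_Integration.integrable_bound)
  have "integrable M (\<lambda>\<omega>. (X \<omega> - Y \<omega>)\<^sup>2)"
    using diff by (simp add: integrable_iff_bounded)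
  then show "integrable M (\<lambda>\<omega>. 2 * (X \<omega>)\<^sup>2 + 2 * (X \<omega> - Y \<omega>)\<^sup>2)"
    using X by simp
  have "(Y \<omega>)\<^sup>2 \<le> 2 * (X \<omega>)\<^sup>2 + 2 * (X \<omega> - Y \<omega>)\<^sup>2" for \<omega>
    using zero_le_power2[of "2 * X \<omega> - Y \<omega>"] by (simp add: power2_eq_square algebra_simps)
  then show "AE \<omega> in M. norm ((Y \<omega>)\<^sup>2) \<le> norm (2 * (X \<omega>)\<^sup>2 + 2 * (X \<omega> - Y \<omega>)\<^sup>2)"
    by (intro AE_I2) simp
qed simp

lemma ennreal_le_of_le_one_plus_eps_squared:
  fixes x Q :: ennreal
  assumes le: "\<And>\<epsilon>. 0 < \<epsilon> \<Longrightarrow> x \<le> ennreal (1 + \<epsilon>) * (ennreal (1 + \<epsilon>) * Q)"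
  shows "x \<le> Q"
proof (cases "Q = \<infinity>")
  case False
  define c where "c k = ennreal (1 + inverse (real (Suc k)))" for k
  have "c \<longlonglongrightarrow> 1"
    unfolding c_def using tendsto_ennrealI[OF tendsto_add[OF tendsto_const LIMSEQ_inverse_real_of_nat, of 1]]
    by simp
  then have "(\<lambda>k. c k * (c k * Q)) \<longlonglongrightarrow> 1 * (1 * Q)"
    using False by (intro tendsto_mult_ennreal tendsto_const) auto
  moreover have "x \<le> c k * (c k * Q)" for k unfolding c_def by (rule le) simp
  ultimately show ?thesis using LIMSEQ_le_const[of "\<lambda>k. c k * (c k * Q)"] by simp
qed simp

context white_noise_space
begin

lemma walsh_integral_moments:
  assumes "walsh_integral M F W f Y"
  shows "integrable M Y" "expectation Y = 0" "integrable M (\<lambda>\<omega>. (Y \<omega>)\<^sup>2)"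
proof -
  obtain ps where ps: "\<And>n. simple_integrand F (ps n)"
    and conv: "(\<lambda>n. \<integral>\<^sup>+ \<omega>. ennreal ((simple_stoch_int W (ps n) \<omega> - Y \<omega>)\<^sup>2) \<partial>M) \<longlonglongrightarrow> 0"
    and Y[measurable]: "Y \<in> borel_measurable M"
    using assms unfolding walsh_integral_def by blast
  define I where "I n = simple_stoch_int W (ps n)" for n
  note I_moments = simple_stoch_int_moments[OF ps, folded I_def]
  have I[measurable]: "I n \<in> borel_measurable M" for n using I_moments(1) by auto
  define e where "e n = (\<integral>\<^sup>+\<omega>. ennreal ((I n \<omega> - Y \<omega>)\<^sup>2) \<partial>M)" for n
  have e: "e \<longlonglongrightarrow> 0" using conv by (simp add: e_def[abs_def] I_def)
  then obtain n0 where "e n0 < 1" using order_tendstoD(2)[OF e, of 1] by (auto simp: eventually_sequentially)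
  then have "e n0 < \<infinity>" by (rule order.strict_trans) simp
  then show Y2: "integrable M (\<lambda>\<omega>. (Y \<omega>)\<^sup>2)"
    unfolding e_def by (intro square_integrable_of_nn_integral_diff_finite[OF I Y I_moments(3)])
  show Y1: "integrable M Y" by (rule square_integrable_imp_integrable[OF Y Y2])
  have "ennreal ((expectation Y)\<^sup>2) \<le> e n" for n
  proof -
    have "expectation (\<lambda>\<omega>. I n \<omega> - Y \<omega>) = - expectation Y"
      using I_moments(1,2) Y1 by simp
    then show ?thesis
      unfolding e_def using square_expectation_le_nn_integral[of "\<lambda>\<omega>. I n \<omega> - Y \<omega>"] I_moments(1) Y1
      by simp
  qed
  then have "ennreal ((expectation Y)\<^sup>2) \<le> 0" using LIMSEQ_le_const[OF e] by blast
  then show "expectation Y = 0" by simp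
qed

text \<open>It follows by letting first \<open>n \<rightarrow> \<infinity>\<close> and then
  \<open>\<epsilon> \<rightarrow> 0\<close> in \<open>(a + b)\<^sup>2 \<le> (1 + \<epsilon>) a\<^sup>2 + (1 + 1/\<epsilon>) b\<^sup>2\<close>, which avoids a triangle inequality for
  \<open>L2_norm_sq\<close>.\<close>

lemma walsh_integral_L2_norm_le:
  assumes wi: "walsh_integral M F W f Y"
    and f[measurable]: "(\<lambda>(\<omega>, z). f (fst z) (snd z) \<omega>) \<in> borel_measurable (M \<Otimes>\<^sub>M (lborel \<Otimes>\<^sub>M lborel))"
  shows "L2_norm_sq M f \<le> (\<integral>\<^sup>+\<omega>. ennreal ((Y \<omega>)\<^sup>2) \<partial>M)"
proof -
  obtain ps where ps: "\<And>n. simple_integrand F (ps n)"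
    and d_conv: "(\<lambda>n. L2_norm_sq M (\<lambda>s y \<omega>. f s y \<omega> - simple_eval (ps n) s y \<omega>)) \<longlonglongrightarrow> 0"
    and e_conv: "(\<lambda>n. \<integral>\<^sup>+ \<omega>. ennreal ((simple_stoch_int W (ps n) \<omega> - Y \<omega>)\<^sup>2) \<partial>M) \<longlonglongrightarrow> 0"
    and Y[measurable]: "Y \<in> borel_measurable M"
    using wi unfolding walsh_integral_def by blast
  define I where "I n = simple_stoch_int W (ps n)" for n
  define d where "d n = L2_norm_sq M (\<lambda>s y \<omega>. f s y \<omega> - simple_eval (ps n) s y \<omega>)" for n
  define e where "e n = (\<integral>\<^sup>+\<omega>. ennreal ((I n \<omega> - Y \<omega>)\<^sup>2) \<partial>M)" for n
  define Q where "Q = (\<integral>\<^sup>+\<omega>. ennreal ((Y \<omega>)\<^sup>2) \<partial>M)"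
  have d: "d \<longlonglongrightarrow> 0" and e: "e \<longlonglongrightarrow> 0"
    using d_conv e_conv by (simp_all add: d_def[abs_def] e_def[abs_def] I_def)
  have [measurable]: "(\<lambda>(\<omega>, z). simple_eval (ps n) (fst z) (snd z) \<omega>)
      \<in> borel_measurable (M \<Otimes>\<^sub>M (lborel \<Otimes>\<^sub>M lborel))" for n
    using simple_eval_measurable[OF ps] .
  have [measurable]: "I n \<in> borel_measurable M" for n
    using simple_stoch_int_moments(1)[OF ps] by (auto simp: I_def)
  have "L2_norm_sq M f \<le> ennreal (1 + \<epsilon>) * (ennreal (1 + \<epsilon>) * Q)" if \<epsilon>: "0 < \<epsilon>" for \<epsilon>
  proof -
    let ?a = "ennreal (1 + \<epsilon>)" and ?b = "ennreal (1 + 1/\<epsilon>)"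
    have approx: "L2_norm_sq M f \<le> ?a * L2_norm_sq M (simple_eval (ps n)) + ?b * d n" for n
      using L2_norm_sq_add_le[OF _ _ \<epsilon>, where g="simple_eval (ps n)"
          and h="\<lambda>s y \<omega>. f s y \<omega> - simple_eval (ps n) s y \<omega>"]
      by (simp add: d_def)
    have isometry: "L2_norm_sq M (simple_eval (ps n)) \<le> ?a * Q + ?b * e n" for n
      unfolding simple_ito_isometry[OF ps] Q_def e_def I_def[symmetric]
      using nn_integral_square_add_le[OF _ _ _ \<epsilon>, of "\<lambda>_. 1" M Y "\<lambda>\<omega>. I n \<omega> - Y \<omega>"]
      by simp
    have "L2_norm_sq M f \<le> ?a * (?a * Q + ?b * e n) + ?b * d n" for n
      using order.trans[OF approx add_right_mono[OF mult_left_mono[OF isometry]]] by simp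
    moreover have "(\<lambda>n. ?a * (?a * Q + ?b * e n) + ?b * d n) \<longlonglongrightarrow> ?a * (?a * Q + ?b * 0) + ?b * 0"
      by (intro tendsto_add ennreal_tendsto_cmult tendsto_const e d) auto
    ultimately show ?thesis
      using LIMSEQ_le_const[of "\<lambda>n. ?a * (?a * Q + ?b * e n) + ?b * d n"] by simp
  qed
  then show ?thesis unfolding Q_def by (rule ennreal_le_of_le_one_plus_eps_squared)
qed
end

section \<open>Mild solutions\<close>

lemma lipschitz_borel_measurable:
  "\<exists>K. K-lipschitz_on UNIV (\<sigma> :: real \<Rightarrow> real) \<Longrightarrow> \<sigma> \<in> borel_measurable borel"
  by (metis borel_measurable_continuous_onI lipschitz_on_continuous_on)

context white_noise_space
begin

lemma predictable_sa_space_sets: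
  defines "\<Omega> \<equiv> {0..} \<times> UNIV \<times> space M"
  shows "space (predictable_sa M F) = \<Omega>"
    "sets (predictable_sa M F) \<subseteq> sets (restrict_space (lborel \<Otimes>\<^sub>M (lborel \<Otimes>\<^sub>M M)) \<Omega>)"
proof -
  let ?N = "lborel \<Otimes>\<^sub>M (lborel \<Otimes>\<^sub>M M) :: (real \<times> real \<times> 'a) measure"
  define G :: "(real \<times> real \<times> 'a) set set" where
    "G = {{a<..b} \<times> A \<times> B | a b A B. 0 \<le> a \<and> a \<le> b \<and> A \<in> sets borel \<and> B \<in> sets (F a)} \<union>
      {{0} \<times> A \<times> B | A B. A \<in> sets borel \<and> B \<in> sets (F 0)}"
  have \<Omega>_space: "\<Omega> \<subseteq> space ?N" unfolding \<Omega>_def by (auto simp: space_pair_measure)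
  have \<Omega>_sets: "\<Omega> \<inter> space ?N \<in> sets ?N"
    unfolding \<Omega>_def by (auto simp: space_pair_measure intro!: pair_measureI)
  have generators: "X \<subseteq> \<Omega> \<and> X \<in> sets ?N" if "X \<in> G" for X
  proof -
    from that consider
        (interval) a b A B where "X = {a<..b} \<times> A \<times> B" "0 \<le> a" "A \<in> sets borel" "B \<in> sets (F a)"
      | (origin) A B where "X = {0} \<times> A \<times> B" "A \<in> sets borel" "B \<in> sets (F 0)"
      unfolding G_def by blast
    then show ?thesis
    proof cases
      case interval
      then have "B \<in> sets M" using sets_F_subset by blast
      then show ?thesis
        using interval sets.sets_into_space[of B M] unfolding \<Omega>_def by (auto intro!: pair_measureI)
    next
      case origin
      then have "B \<in> sets M" using sets_F_subset by blast
      then show ?thesis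
        using origin sets.sets_into_space[of B M] unfolding \<Omega>_def by (auto intro!: pair_measureI)
    qed
  qed
  have "G \<subseteq> Pow \<Omega>" using generators by blast
  then have sets: "sets (predictable_sa M F) = sigma_sets \<Omega> G"
    unfolding predictable_sa_def G_def \<Omega>_def by (rule sets_measure_of)
  from \<open>G \<subseteq> Pow \<Omega>\<close> show "space (predictable_sa M F) = \<Omega>"
    unfolding predictable_sa_def G_def \<Omega>_def by (rule space_measure_of)
  have "G \<subseteq> sets (restrict_space ?N \<Omega>)"
  proof
    fix X assume "X \<in> G"
    then show "X \<in> sets (restrict_space ?N \<Omega>)"
      using generators by (subst sets_restrict_space_iff[OF \<Omega>_sets]) blast
  qed
  show "sets (predictable_sa M F) \<subseteq> sets (restrict_space ?N \<Omega>)"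
  proof -
    have "space (restrict_space ?N \<Omega>) = \<Omega>" using \<Omega>_space by (auto simp: space_restrict_space)
    then show ?thesis using sets.sigma_sets_subset[OF \<open>G \<subseteq> sets (restrict_space ?N \<Omega>)\<close>]
      unfolding sets by simp
  qed
qed

lemma predictable_borel_measurable:
  assumes "predictable M F u"
  shows "(\<lambda>(\<omega>, z). indicator {0..} (fst z) * u (fst z) (snd z) \<omega>)
    \<in> borel_measurable (M \<Otimes>\<^sub>M (lborel \<Otimes>\<^sub>M lborel))"
proof -
  let ?N = "lborel \<Otimes>\<^sub>M (lborel \<Otimes>\<^sub>M M) :: (real \<times> real \<times> 'a) measure"
  define \<Omega> where "\<Omega> = {0::real..} \<times> (UNIV :: real set) \<times> space M"
  have \<Omega>_sets: "\<Omega> \<inter> space ?N \<in> sets ?N"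
    unfolding \<Omega>_def by (auto simp: space_pair_measure intro!: pair_measureI)
  have "(\<lambda>(t, x, \<omega>). u t x \<omega>) \<in> borel_measurable (restrict_space ?N \<Omega>)"
    using assms predictable_sa_space_sets
      measurable_mono[of borel borel "predictable_sa M F" "restrict_space ?N \<Omega>"]
    unfolding predictable_def \<Omega>_def by (auto simp: space_restrict_space space_pair_measure)
  then have "(\<lambda>p. indicator \<Omega> p *\<^sub>R (\<lambda>(t, x, \<omega>). u t x \<omega>) p) \<in> borel_measurable ?N"
    by (rule borel_measurable_restrict_space_iff[OF \<Omega>_sets, THEN iffD1])
  moreover have "(\<lambda>(\<omega>, z). (fst z, snd z, \<omega>)) \<in> measurable (M \<Otimes>\<^sub>M (lborel \<Otimes>\<^sub>M lborel)) ?N"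
    by measurable
  ultimately have "(\<lambda>q. (\<lambda>p. indicator \<Omega> p *\<^sub>R (\<lambda>(t, x, \<omega>). u t x \<omega>) p) ((\<lambda>(\<omega>, z). (fst z, snd z, \<omega>)) q))
      \<in> borel_measurable (M \<Otimes>\<^sub>M (lborel \<Otimes>\<^sub>M lborel))"
    by (rule measurable_compose[rotated])
  then show ?thesis
    by (rule measurable_cong[THEN iffD1, rotated])
      (auto simp: \<Omega>_def indicator_def space_pair_measure)
qed

end

definition second_moment :: "'a measure \<Rightarrow> (real \<Rightarrow> real \<Rightarrow> 'a \<Rightarrow> real) \<Rightarrow> real \<times> real \<Rightarrow> ennreal" where
  "second_moment M u z = (\<integral>\<^sup>+\<omega>. ennreal ((indicator {0..} (fst z) * u (fst z) (snd z) \<omega>)\<^sup>2) \<partial>M)"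

definition moment_kernel :: "real \<Rightarrow> real \<Rightarrow> real \<times> real \<Rightarrow> real \<times> real \<Rightarrow> real" where
  "moment_kernel L \<kappa> z w = L\<^sup>2 * indicator {0..fst z} (fst w) * (heat_kernel \<kappa> (fst z - fst w) (snd w - snd z))\<^sup>2"

lemma moment_kernel_nonneg: "0 \<le> moment_kernel L \<kappa> z w"
  by (simp add: moment_kernel_def)

lemma indicator_atLeastAtMost_zero: "indicator {0..a} b = (if 0 \<le> b \<and> b \<le> a then 1 else (0::real))"
  by (simp add: indicator_def)

lemma moment_kernel_measurable[measurable]:
  "(\<lambda>p. moment_kernel L \<kappa> (fst p) (snd p)) \<in> borel_measurable ((lborel \<Otimes>\<^sub>M lborel) \<Otimes>\<^sub>M (lborel \<Otimes>\<^sub>M lborel))"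
  unfolding moment_kernel_def heat_kernel_def indicator_atLeastAtMost_zero by measurable

lemma moment_kernel_measurable_fst: "(\<lambda>z. moment_kernel L \<kappa> z w) \<in> borel_measurable (lborel \<Otimes>\<^sub>M lborel)"
  unfolding moment_kernel_def heat_kernel_def indicator_atLeastAtMost_zero by measurable

lemma moment_kernel_measurable_snd: "(\<lambda>w. moment_kernel L \<kappa> z w) \<in> borel_measurable (lborel \<Otimes>\<^sub>M lborel)"
  unfolding moment_kernel_def heat_kernel_def indicator_atLeastAtMost_zero by measurable

lemma moment_kernel_mult_square_le:
  assumes \<sigma>_lower: "\<And>v. L * \<bar>v\<bar> \<le> \<bar>\<sigma> v\<bar>" and L: "0 \<le> L"
  shows "moment_kernel L \<kappa> (t, x) (s, y) * (indicator {0..} s * v)\<^sup>2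
    \<le> (indicator {0..t} s * heat_kernel \<kappa> (t - s) (y - x) * \<sigma> v)\<^sup>2"
proof (cases "s \<in> {0..t}")
  case True
  define h where "h = heat_kernel \<kappa> (t - s) (y - x)"
  have "(L * \<bar>v\<bar>)\<^sup>2 \<le> \<bar>\<sigma> v\<bar>\<^sup>2" using \<sigma>_lower[of v] L by (intro power_mono) auto
  then have "L\<^sup>2 * v\<^sup>2 \<le> (\<sigma> v)\<^sup>2" by (simp add: power_mult_distrib)
  then have "h\<^sup>2 * (L\<^sup>2 * v\<^sup>2) \<le> h\<^sup>2 * (\<sigma> v)\<^sup>2" by (rule mult_left_mono) simp
  moreover have "moment_kernel L \<kappa> (t, x) (s, y) * (indicator {0..} s * v)\<^sup>2 = h\<^sup>2 * (L\<^sup>2 * v\<^sup>2)"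
    using True by (simp add: moment_kernel_def h_def power_mult_distrib)
  moreover have "(indicator {0..t} s * h * \<sigma> v)\<^sup>2 = h\<^sup>2 * (\<sigma> v)\<^sup>2"
    using True by (simp add: power_mult_distrib)
  ultimately show ?thesis by (simp add: h_def)
qed (simp add: moment_kernel_def)

context white_noise_space
begin

lemma second_moment_measurable[measurable]:
  assumes "predictable M F u"
  shows "second_moment M u \<in> borel_measurable (lborel \<Otimes>\<^sub>M lborel)"
proof -
  have "(\<lambda>(z, \<omega>). ennreal ((indicator {0..} (fst z) * u (fst z) (snd z) \<omega>)\<^sup>2))
      \<in> borel_measurable ((lborel \<Otimes>\<^sub>M lborel) \<Otimes>\<^sub>M M)"
    using predictable_borel_measurable[OF assms]
    by (subst measurable_pair_swap_iff) (simp add: case_prod_beta')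
  then show ?thesis unfolding second_moment_def[abs_def] by (rule borel_measurable_nn_integral)
qed

text \<open>The mean-zero Walsh integral is orthogonal to the deterministic part \<open>P\<^sub>t u\<^sub>0\<close>.\<close>

lemma mild_solution_second_moment:
  assumes sol: "mild_solution M F W \<kappa> \<sigma> u0 u" and [measurable]: "\<sigma> \<in> borel_measurable borel"
    and t: "0 < t"
  obtains Y where
    "L2_norm_sq M (\<lambda>s y \<omega>. indicator {0..t} s * heat_kernel \<kappa> (t - s) (y - x) * \<sigma> (u s y \<omega>))
      \<le> (\<integral>\<^sup>+\<omega>. ennreal ((Y \<omega>)\<^sup>2) \<partial>M)"
    "second_moment M u (t, x) = ennreal ((heat_semigroup \<kappa> t u0 x)\<^sup>2) + (\<integral>\<^sup>+\<omega>. ennreal ((Y \<omega>)\<^sup>2) \<partial>M)"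
proof -
  define c where "c = heat_semigroup \<kappa> t u0 x"
  define f where "f = (\<lambda>s y \<omega>. indicator {0..t} s * heat_kernel \<kappa> (t - s) (y - x) * \<sigma> (u s y \<omega>))"
  obtain Y where Y: "walsh_integral M F W f Y" "AE \<omega> in M. u t x \<omega> = c + Y \<omega>"
    using sol t unfolding mild_solution_def f_def c_def by blast
  define ut where "ut = (\<lambda>(\<omega>, z). indicator {0..} (fst z) * u (fst z) (snd z) \<omega>)"
  have [measurable]: "ut \<in> borel_measurable (M \<Otimes>\<^sub>M (lborel \<Otimes>\<^sub>M lborel))"
    unfolding ut_def using sol by (intro predictable_borel_measurable) (simp add: mild_solution_def)
  have "(\<lambda>(\<omega>, z). f (fst z) (snd z) \<omega>) =
     (\<lambda>q. indicator {0..t} (fst (snd q)) * heat_kernel \<kappa> (t - fst (snd q)) (snd (snd q) - x) * \<sigma> (ut q))"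
    by (auto simp: f_def ut_def indicator_def fun_eq_iff)
  then have "(\<lambda>(\<omega>, z). f (fst z) (snd z) \<omega>) \<in> borel_measurable (M \<Otimes>\<^sub>M (lborel \<Otimes>\<^sub>M lborel))"
    unfolding heat_kernel_def by simp
  then have norm: "L2_norm_sq M f \<le> (\<integral>\<^sup>+\<omega>. ennreal ((Y \<omega>)\<^sup>2) \<partial>M)"
    by (rule walsh_integral_L2_norm_le[OF Y(1)])
  note Y_moments = walsh_integral_moments[OF Y(1)]
  have expand: "(\<lambda>\<omega>. (c + Y \<omega>)\<^sup>2) = (\<lambda>\<omega>. c\<^sup>2 + 2 * c * Y \<omega> + (Y \<omega>)\<^sup>2)"
    by (simp add: power2_sum fun_eq_iff)
  have "second_moment M u (t, x) = (\<integral>\<^sup>+\<omega>. ennreal ((c + Y \<omega>)\<^sup>2) \<partial>M)"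
    unfolding second_moment_def using t by (intro nn_integral_cong_AE) (use Y(2) in auto)
  also have "\<dots> = ennreal (expectation (\<lambda>\<omega>. (c + Y \<omega>)\<^sup>2))"
    using Y_moments by (intro nn_integral_eq_integral) (auto simp: expand)
  also have "expectation (\<lambda>\<omega>. (c + Y \<omega>)\<^sup>2) = c\<^sup>2 + expectation (\<lambda>\<omega>. (Y \<omega>)\<^sup>2)"
    using Y_moments by (simp add: expand prob_space)
  also have "ennreal \<dots> = ennreal (c\<^sup>2) + (\<integral>\<^sup>+\<omega>. ennreal ((Y \<omega>)\<^sup>2) \<partial>M)"
    using Y_moments(3) by (simp add: ennreal_plus nn_integral_eq_integral)
  finally show ?thesis using norm that unfolding f_def c_def by blast
qed

lemma second_moment_ge_heat_semigroup:
  assumes "mild_solution M F W \<kappa> \<sigma> u0 u" "\<sigma> \<in> borel_measurable borel" "0 < t"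
  shows "ennreal ((heat_semigroup \<kappa> t u0 x)\<^sup>2) \<le> second_moment M u (t, x)"
  using mild_solution_second_moment[OF assms] by (metis add_increasing2 order_refl zero_le)

lemma second_moment_ge_renewal:
  assumes sol: "mild_solution M F W \<kappa> \<sigma> u0 u" and \<sigma>[measurable]: "\<sigma> \<in> borel_measurable borel"
    and \<sigma>_lower: "\<And>v. L * \<bar>v\<bar> \<le> \<bar>\<sigma> v\<bar>" and L: "0 \<le> L" and t: "0 < t"
  shows "(\<integral>\<^sup>+w. ennreal (moment_kernel L \<kappa> (t, x) w) * second_moment M u w \<partial>(lborel \<Otimes>\<^sub>M lborel))
    \<le> second_moment M u (t, x)"
proof -
  interpret PL: pair_sigma_finite M "lborel \<Otimes>\<^sub>M lborel :: (real \<times> real) measure"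
    unfolding pair_sigma_finite_def using sigma_finite_lborel_lborel by (simp add: sigma_finite_measure_axioms)
  obtain Y where
    norm: "L2_norm_sq M (\<lambda>s y \<omega>. indicator {0..t} s * heat_kernel \<kappa> (t - s) (y - x) * \<sigma> (u s y \<omega>))
      \<le> (\<integral>\<^sup>+\<omega>. ennreal ((Y \<omega>)\<^sup>2) \<partial>M)" and
    moment: "second_moment M u (t, x) = ennreal ((heat_semigroup \<kappa> t u0 x)\<^sup>2) + (\<integral>\<^sup>+\<omega>. ennreal ((Y \<omega>)\<^sup>2) \<partial>M)"
    using mild_solution_second_moment[OF sol \<sigma> t] by blast
  define K where "K w = moment_kernel L \<kappa> (t, x) w" for w
  define ut where "ut = (\<lambda>(\<omega>, w). indicator {0..} (fst w) * u (fst w) (snd w) \<omega>)"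
  have [measurable]: "ut \<in> borel_measurable (M \<Otimes>\<^sub>M (lborel \<Otimes>\<^sub>M lborel))"
    unfolding ut_def using sol by (intro predictable_borel_measurable) (simp add: mild_solution_def)
  have [measurable]: "K \<in> borel_measurable (lborel \<Otimes>\<^sub>M lborel)"
    unfolding K_def by (rule moment_kernel_measurable_snd)
  have second_moment_eq: "second_moment M u w = (\<integral>\<^sup>+\<omega>. ennreal ((ut (\<omega>, w))\<^sup>2) \<partial>M)" for w
    by (simp add: second_moment_def ut_def)
  have "(\<integral>\<^sup>+w. ennreal (K w) * second_moment M u w \<partial>(lborel \<Otimes>\<^sub>M lborel))
      = (\<integral>\<^sup>+w. (\<integral>\<^sup>+\<omega>. ennreal (K w) * ennreal ((ut (\<omega>, w))\<^sup>2) \<partial>M) \<partial>(lborel \<Otimes>\<^sub>M lborel))"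
    unfolding second_moment_eq by (intro nn_integral_cong nn_integral_cmult[symmetric]) measurable
  also have "\<dots> = (\<integral>\<^sup>+\<omega>. (\<integral>\<^sup>+w. ennreal (K w) * ennreal ((ut (\<omega>, w))\<^sup>2) \<partial>(lborel \<Otimes>\<^sub>M lborel)) \<partial>M)"
    by (rule PL.Fubini') measurable
  also have "\<dots> \<le> L2_norm_sq M (\<lambda>s y \<omega>. indicator {0..t} s * heat_kernel \<kappa> (t - s) (y - x) * \<sigma> (u s y \<omega>))"
    unfolding L2_norm_sq_def
  proof (intro nn_integral_mono)
    fix \<omega> and w :: "real \<times> real"
    obtain s y where w: "w = (s, y)" by (cases w)
    have "ennreal (K w) * ennreal ((ut (\<omega>, w))\<^sup>2) = ennreal (K w * (ut (\<omega>, w))\<^sup>2)"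
      by (simp add: K_def moment_kernel_nonneg ennreal_mult')
    also have "\<dots> \<le> ennreal ((indicator {0..t} s * heat_kernel \<kappa> (t - s) (y - x) * \<sigma> (u s y \<omega>))\<^sup>2)"
      using moment_kernel_mult_square_le[OF \<sigma>_lower L, of \<kappa> t x s y "u s y \<omega>"]
      by (simp add: K_def ut_def w ennreal_leI)
    also have "\<dots> = indicator ({0..} \<times> UNIV) w * ennreal ((indicator {0..t} (fst w)
          * heat_kernel \<kappa> (t - fst w) (snd w - x) * \<sigma> (u (fst w) (snd w) \<omega>))\<^sup>2)"
      by (cases "0 \<le> s") (simp_all add: w indicator_def)
    finally show "ennreal (K w) * ennreal ((ut (\<omega>, w))\<^sup>2)
        \<le> indicator ({0..} \<times> UNIV) w * ennreal ((indicator {0..t} (fst w)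
          * heat_kernel \<kappa> (t - fst w) (snd w - x) * \<sigma> (u (fst w) (snd w) \<omega>))\<^sup>2)" .
  qed
  also have "\<dots> \<le> second_moment M u (t, x)"
    unfolding moment by (rule order_trans[OF norm add_increasing]) simp_all
  finally show ?thesis unfolding K_def .
qed

end

section \<open>The heat kernel and the data\<close>

lemma lsc_borel_measurable:
  assumes "lsc f"
  shows "f \<in> borel_measurable borel"
proof (rule borel_measurableI_greater)
  fix c
  have "open {x. c < f x}"
  proof (rule open_subopen[THEN iffD2], intro ballI)
    fix x assume x: "x \<in> {x. c < f x}"
    then have "\<forall>\<^sub>F y in at x. c < f y" using assms unfolding lsc_def by blast
    then obtain S where S: "open S" "x \<in> S" "\<forall>y\<in>S. y \<noteq> x \<longrightarrow> c < f y"
      unfolding eventually_at_topological by blast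
    then have "S \<subseteq> {x. c < f x}" using x by auto
    then show "\<exists>T. open T \<and> x \<in> T \<and> T \<subseteq> {x. c < f x}" using S(1,2) by blast
  qed
  then show "{x \<in> space borel. c < f x} \<in> sets borel" by simp
qed

lemma heat_kernel_zero_time: "heat_kernel \<kappa> 0 z = 0"
  by (simp add: heat_kernel_def)

lemma heat_kernel_minus: "heat_kernel \<kappa> t (- z) = heat_kernel \<kappa> t z"
  by (simp add: heat_kernel_def)

lemma heat_kernel_eq_normal_density:
  assumes "0 < \<kappa>" "0 < t"
  shows "heat_kernel \<kappa> t z = normal_density 0 (sqrt (\<kappa> * t)) z"
proof -
  have "(sqrt (\<kappa> * t))\<^sup>2 = \<kappa> * t" using assms by simp
  then show ?thesis by (simp add: heat_kernel_def normal_density_def ac_simps del: real_sqrt_mult)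
qed

lemma heat_kernel_square:
  assumes "0 < \<kappa>" "0 < t"
  shows "(heat_kernel \<kappa> t z)\<^sup>2 = exp (- z\<^sup>2 / (\<kappa> * t)) / (2 * pi * \<kappa> * t)"
proof -
  have "(exp (- z\<^sup>2 / (2 * \<kappa> * t)))\<^sup>2 = exp (- z\<^sup>2 / (2 * \<kappa> * t) + - z\<^sup>2 / (2 * \<kappa> * t))"
    by (simp only: power2_eq_square exp_add)
  also have "- z\<^sup>2 / (2 * \<kappa> * t) + - z\<^sup>2 / (2 * \<kappa> * t) = - z\<^sup>2 / (\<kappa> * t)" by simp
  finally have "(exp (- z\<^sup>2 / (2 * \<kappa> * t)))\<^sup>2 = exp (- z\<^sup>2 / (\<kappa> * t))" .
  moreover have "(sqrt (2 * pi * \<kappa> * t))\<^sup>2 = 2 * pi * \<kappa> * t" using assms by simp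
  ultimately show ?thesis by (simp add: heat_kernel_def power_divide)
qed

lemma heat_semigroup_pos:
  assumes \<kappa>: "0 < \<kappa>" and t: "0 < t" and nonneg: "\<And>y. 0 \<le> u0 y"
    and [measurable]: "u0 \<in> borel_measurable borel"
    and bounded: "bounded (range u0)" and pos: "emeasure lborel {y. u0 y > 0} > 0"
  shows "0 < heat_semigroup \<kappa> t u0 x"
proof -
  obtain B where B: "\<And>y. \<bar>u0 y\<bar> \<le> B" using bounded unfolding bounded_iff by auto
  define s where "s = sqrt (\<kappa> * t)"
  have s: "0 < s" using \<kappa> t by (simp add: s_def)
  define g where "g y = normal_density x s y * u0 y" for y
  have [measurable]: "g \<in> borel_measurable lborel" unfolding g_def by measurable
  have g_nonneg: "0 \<le> g y" for y unfolding g_def using nonneg[of y] by simp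
  have "heat_kernel \<kappa> t (y - x) = normal_density x s y" for y
    using heat_kernel_eq_normal_density[OF \<kappa> t, of "y - x"]
    by (simp add: s_def normal_density_def power2_commute)
  then have eq: "heat_semigroup \<kappa> t u0 x = integral\<^sup>L lborel g"
    unfolding heat_semigroup_def g_def by simp
  have g_integrable: "integrable lborel g"
  proof (rule Bochner_Integration.integrable_bound[where f="\<lambda>y. B * normal_density x s y"])
    show "integrable lborel (\<lambda>y. B * normal_density x s y)" using integrable_normal_density[OF s] by simp
    show "AE y in lborel. norm (g y) \<le> norm (B * normal_density x s y)"
    proof (rule AE_I2)
      fix y
      have "normal_density x s y * \<bar>u0 y\<bar> \<le> normal_density x s y * B"
        by (rule mult_left_mono[OF B]) simp
      moreover have "0 \<le> B" using B[of y] by simp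
      ultimately show "norm (g y) \<le> norm (B * normal_density x s y)"
        by (simp add: g_def abs_mult mult.commute)
    qed
  qed simp
  have "integral\<^sup>L lborel g \<noteq> 0"
  proof
    assume "integral\<^sup>L lborel g = 0"
    then have "AE y in lborel. g y = 0"
      using integral_nonneg_eq_0_iff_AE[OF g_integrable] g_nonneg by simp
    then have "AE y in lborel. \<not> u0 y > 0"
    proof eventually_elim
      fix y assume "g y = 0"
      then show "\<not> u0 y > 0" using normal_density_pos[OF s, of x y] by (auto simp: g_def)
    qed
    then have "emeasure lborel {y \<in> space lborel. u0 y > 0} = 0"
      by (subst AE_iff_measurable[symmetric, where P="\<lambda>y. \<not> u0 y > 0"]) auto
    then show False using pos by simp
  qed
  moreover have "0 \<le> integral\<^sup>L lborel g" by (simp add: g_nonneg)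
  ultimately show ?thesis unfolding eq by simp
qed

lemma L_sigma_nonneg: "0 \<le> L_sigma \<sigma>"
  unfolding L_sigma_def by (rule cInf_greatest) auto

lemma L_sigma_mult_abs_le:
  assumes "\<sigma> 0 = 0"
  shows "L_sigma \<sigma> * \<bar>y\<bar> \<le> \<bar>\<sigma> y\<bar>"
proof (cases "y = 0")
  case False
  have "L_sigma \<sigma> \<le> \<bar>\<sigma> y / y\<bar>" unfolding L_sigma_def
  proof (rule cInf_lower)
    show "\<bar>\<sigma> y / y\<bar> \<in> {\<bar>\<sigma> x / x\<bar> |x. x \<noteq> 0}" using False by auto
    show "bdd_below {\<bar>\<sigma> x / x\<bar> |x. x \<noteq> 0}" by (rule bdd_belowI[of _ 0]) auto
  qed
  then have "L_sigma \<sigma> * \<bar>y\<bar> \<le> \<bar>\<sigma> y / y\<bar> * \<bar>y\<bar>" by (rule mult_right_mono) simp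
  also have "\<dots> = \<bar>\<sigma> y\<bar>" using False by (simp add: abs_divide)
  finally show ?thesis .
qed (use assms in simp)

section \<open>The cone kernel\<close>

lemma divide_one_plus_square_le_arctan:
  assumes "0 \<le> x"
  shows "x / (1 + x\<^sup>2) \<le> arctan x"
proof (cases "x = 0")
  case False
  then have x: "0 < x" using assms by simp
  obtain z where z: "0 < z" "z < x" "arctan x - arctan 0 = (x - 0) * inverse (1 + z\<^sup>2)"
    using MVT2[OF x, of arctan "\<lambda>y. inverse (1 + y\<^sup>2)"] DERIV_arctan by blast
  have "1 + z\<^sup>2 \<le> 1 + x\<^sup>2" using z by (intro add_left_mono power_mono) auto
  then have "inverse (1 + x\<^sup>2) \<le> inverse (1 + z\<^sup>2)"
    by (rule le_imp_inverse_le) (use zero_le_power2[of z] in linarith)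
  then have "x * inverse (1 + x\<^sup>2) \<le> x * inverse (1 + z\<^sup>2)" using x by (intro mult_left_mono) auto
  then show ?thesis using z(3) unfolding divide_inverse by simp
qed simp

lemma nn_integral_exp_neg_mult:
  assumes a: "0 < a"
  shows "(\<integral>\<^sup>+r. indicator {0<..} r * ennreal (exp (- a * r)) \<partial>lborel) = ennreal (1 / a)"
proof -
  have "(\<integral>\<^sup>+r. indicator {0<..} r * ennreal (exp (- a * r)) \<partial>lborel) =
        (\<integral>\<^sup>+r. ennreal (exp (- a * r)) * indicator {0..} r \<partial>lborel)"
    by (rule nn_integral_cong_AE) (use AE_lborel_singleton[of 0] in \<open>auto simp: indicator_def\<close>)
  also have "\<dots> = ennreal (0 - (- exp (- a * 0) / a))"
  proof (rule nn_integral_FTC_atLeast)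
    show "DERIV (\<lambda>r. - exp (- a * r) / a) x :> exp (- a * x)" for x
      using a by (auto intro!: derivative_eq_intros)
    have "LIM r at_top. exp (a * r) :> at_top"
      by (rule filterlim_compose[OF exp_at_top filterlim_tendsto_pos_mult_at_top[OF tendsto_const a filterlim_ident]])
    then have "((\<lambda>r. inverse (exp (a * r))) \<longlongrightarrow> 0) at_top" by (rule tendsto_inverse_0_at_top)
    then have "((\<lambda>r. - (inverse (exp (a * r))) / a) \<longlongrightarrow> - 0 / a) at_top"
      by (intro tendsto_divide tendsto_minus tendsto_const) (use a in auto)
    then show "((\<lambda>r. - exp (- a * r) / a) \<longlongrightarrow> 0) at_top" by (simp add: exp_minus)
  qed auto
  finally show ?thesis by simp
qed

lemma nn_integral_inverse_square_plus:
  assumes b: "0 < b"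
  shows "(\<integral>\<^sup>+w. ennreal (1 / (b\<^sup>2 + w\<^sup>2)) * indicator {\<alpha>..} w \<partial>lborel)
    = ennreal (pi / (2 * b) - arctan (\<alpha> / b) / b)"
proof (rule nn_integral_FTC_atLeast)
  show "DERIV (\<lambda>w. arctan (w / b) / b) x :> 1 / (b\<^sup>2 + x\<^sup>2)" for x
  proof -
    have "DERIV (\<lambda>w. arctan (w / b) / b) x :> inverse (1 + (x / b)\<^sup>2) * (1 / b) / b"
      by (intro derivative_eq_intros DERIV_arctan) (use b in auto)
    moreover have "inverse (1 + (x / b)\<^sup>2) * (1 / b) / b = 1 / (b\<^sup>2 + x\<^sup>2)"
    proof -
      have "b\<^sup>2 + x\<^sup>2 \<noteq> 0" using b by (metis add_pos_nonneg zero_le_power2 zero_less_power less_irrefl)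
      moreover have "0 < b * (b * b) + b * (x * x)" using b by (intro add_pos_nonneg) auto
      ultimately show ?thesis using b by (simp add: field_simps power2_eq_square)
    qed
    ultimately show ?thesis by simp
  qed
  have "LIM w at_top. (1 / b) * w :> at_top"
    by (rule filterlim_tendsto_pos_mult_at_top[OF tendsto_const _ filterlim_ident]) (use b in simp)
  then have "((\<lambda>w. arctan ((1 / b) * w)) \<longlongrightarrow> pi / 2) at_top"
    by (rule filterlim_compose[OF tendsto_arctan_at_top])
  then have "((\<lambda>w. arctan ((1 / b) * w) / b) \<longlongrightarrow> pi / 2 / b) at_top"
    by (intro tendsto_divide tendsto_const) (use b in auto)
  then show "((\<lambda>w. arctan (w / b) / b) \<longlongrightarrow> pi / (2 * b)) at_top" by simp
qed (auto simp: add_nonneg_nonneg)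

text \<open>The moment kernel on increments \<open>(r, z)\<close> in the half-cone \<open>\<alpha> r \<le> z\<close>, damped by \<open>e\<^sup>-\<^sup>\<beta>\<^sup>r\<close>;
  its total mass is the factor \<open>k\<close> gained by the renewal inequality on the cone.\<close>

definition cone_kernel :: "real \<Rightarrow> real \<Rightarrow> real \<Rightarrow> real \<Rightarrow> real \<times> real \<Rightarrow> real" where
  "cone_kernel L \<kappa> \<alpha> \<beta> q = (if 0 \<le> fst q \<and> \<alpha> * fst q \<le> snd q
     then L\<^sup>2 * exp (- \<beta> * fst q) * (heat_kernel \<kappa> (fst q) (snd q))\<^sup>2 else 0)"

lemma cone_kernel_measurable[measurable]: "cone_kernel L \<kappa> \<alpha> \<beta> \<in> borel_measurable (lborel \<Otimes>\<^sub>M lborel)"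
  unfolding cone_kernel_def heat_kernel_def by measurable

lemma cone_kernel_nonneg: "0 \<le> cone_kernel L \<kappa> \<alpha> \<beta> q"
  by (simp add: cone_kernel_def)

text \<open>Substituting \<open>z = r w\<close> turns the Gaussian in \<open>z\<close> into an exponential in \<open>r\<close>.\<close>

lemma nn_integral_cone_kernel_section:
  assumes \<kappa>: "0 < \<kappa>" and r: "0 < r"
  shows "(\<integral>\<^sup>+z. ennreal (cone_kernel L \<kappa> \<alpha> \<beta> (r, z)) \<partial>lborel) =
     (\<integral>\<^sup>+w. ennreal (L\<^sup>2 / (2 * pi * \<kappa>) * exp (- (\<beta> + w\<^sup>2 / \<kappa>) * r)) * indicator {\<alpha>..} w \<partial>lborel)"
proof -
  have m: "(\<lambda>z. ennreal (cone_kernel L \<kappa> \<alpha> \<beta> (r, z))) \<in> borel_measurable borel" by measurable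
  have "(\<integral>\<^sup>+z. ennreal (cone_kernel L \<kappa> \<alpha> \<beta> (r, z)) \<partial>lborel)
      = ennreal r * (\<integral>\<^sup>+w. ennreal (cone_kernel L \<kappa> \<alpha> \<beta> (r, r * w)) \<partial>lborel)"
    using nn_integral_real_affine[OF m, of r 0] r by simp
  also have "\<dots> = (\<integral>\<^sup>+w. ennreal (r * cone_kernel L \<kappa> \<alpha> \<beta> (r, r * w)) \<partial>lborel)"
    using r by (subst nn_integral_cmult[symmetric])
      (auto intro!: nn_integral_cong simp: ennreal_mult cone_kernel_nonneg)
  also have "\<dots> = (\<integral>\<^sup>+w. ennreal (L\<^sup>2 / (2 * pi * \<kappa>) * exp (- (\<beta> + w\<^sup>2 / \<kappa>) * r)) * indicator {\<alpha>..} w \<partial>lborel)"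
  proof (rule nn_integral_cong)
    fix w :: real
    have "r * cone_kernel L \<kappa> \<alpha> \<beta> (r, r * w)
        = (if \<alpha> \<le> w then L\<^sup>2 / (2 * pi * \<kappa>) * exp (- (\<beta> + w\<^sup>2 / \<kappa>) * r) else 0)"
    proof (cases "\<alpha> \<le> w")
      case True
      then have cone: "0 \<le> r \<and> \<alpha> * r \<le> r * w" using r by (simp add: mult.commute mult_left_mono)
      have exp: "exp (- \<beta> * r) * exp (- (r * w)\<^sup>2 / (\<kappa> * r)) = exp (- (\<beta> + w\<^sup>2 / \<kappa>) * r)"
        unfolding exp_add[symmetric] using r \<kappa> by (simp add: power2_eq_square field_simps)
      have "r * (L\<^sup>2 * exp (- \<beta> * r) * (exp (- (r * w)\<^sup>2 / (\<kappa> * r)) / (2 * pi * \<kappa> * r))) =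
          L\<^sup>2 / (2 * pi * \<kappa>) * (exp (- \<beta> * r) * exp (- (r * w)\<^sup>2 / (\<kappa> * r)))"
        using r \<kappa> by (simp add: field_simps)
      then show ?thesis using True cone exp by (simp add: cone_kernel_def heat_kernel_square[OF \<kappa> r])
    next
      case False
      then have "\<not> \<alpha> * r \<le> r * w" using r by (simp add: mult.commute)
      then show ?thesis using False by (simp add: cone_kernel_def)
    qed
    then show "ennreal (r * cone_kernel L \<kappa> \<alpha> \<beta> (r, r * w)) =
        ennreal (L\<^sup>2 / (2 * pi * \<kappa>) * exp (- (\<beta> + w\<^sup>2 / \<kappa>) * r)) * indicator {\<alpha>..} w"
      by (simp add: indicator_def)
  qed
  finally show ?thesis .
qed

lemma cone_kernel_mass_gt_1:
  assumes \<kappa>: "0 < \<kappa>" and \<alpha>: "0 < \<alpha>" and \<beta>: "0 < \<beta>" and cond: "\<alpha>\<^sup>2 + \<kappa> * \<beta> < \<alpha> * L\<^sup>2 / (2 * pi)"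
  defines "c \<equiv> sqrt (\<kappa> * \<beta>)"
  shows "1 < L\<^sup>2 / (2 * pi) * (pi / (2 * c) - arctan (\<alpha> / c) / c)"
proof -
  have c: "0 < c" "c\<^sup>2 = \<kappa> * \<beta>" using \<kappa> \<beta> by (simp_all add: c_def)
  define y where "y = \<alpha> / c"
  have y: "0 < y" using \<alpha> c by (simp add: y_def)
  have "(1 / y) / (1 + (1 / y)\<^sup>2) \<le> arctan (1 / y)" using y by (intro divide_one_plus_square_le_arctan) simp
  moreover have "(1 / y) / (1 + (1 / y)\<^sup>2) = y / (y\<^sup>2 + 1)" using y by (simp add: field_simps power2_eq_square)
  moreover have "arctan (1 / y) = pi / 2 - arctan y" using arctan_inverse[OF y] by (simp add: inverse_eq_divide)
  ultimately have "y / (y\<^sup>2 + 1) \<le> pi / 2 - arctan y" by simp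
  then have "y / (y\<^sup>2 + 1) / c \<le> (pi / 2 - arctan y) / c" by (rule divide_right_mono) (use c in auto)
  moreover have "y / (y\<^sup>2 + 1) / c = \<alpha> / (\<alpha>\<^sup>2 + \<kappa> * \<beta>)"
  proof -
    have "(\<alpha> / c)\<^sup>2 + 1 = (\<alpha>\<^sup>2 + c\<^sup>2) / c\<^sup>2" using c(1) by (simp add: field_simps power2_eq_square)
    moreover have "(\<alpha> / c) / ((\<alpha>\<^sup>2 + c\<^sup>2) / c\<^sup>2) / c = \<alpha> / (\<alpha>\<^sup>2 + c\<^sup>2)"
      using c(1) \<alpha> by (simp add: power2_eq_square add_pos_pos)
    ultimately show ?thesis unfolding y_def c(2) by simp
  qed
  moreover have "(pi / 2 - arctan y) / c = pi / (2 * c) - arctan (\<alpha> / c) / c"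
    using c by (simp add: y_def field_simps)
  ultimately have le: "\<alpha> / (\<alpha>\<^sup>2 + \<kappa> * \<beta>) \<le> pi / (2 * c) - arctan (\<alpha> / c) / c" by simp
  have "1 < (\<alpha> * L\<^sup>2 / (2 * pi)) / (\<alpha>\<^sup>2 + \<kappa> * \<beta>)"
    using cond \<alpha> \<kappa> \<beta> by (subst less_divide_eq_1_pos) (auto simp: add_pos_pos)
  also have "\<dots> = L\<^sup>2 / (2 * pi) * (\<alpha> / (\<alpha>\<^sup>2 + \<kappa> * \<beta>))" by simp
  also have "\<dots> \<le> L\<^sup>2 / (2 * pi) * (pi / (2 * c) - arctan (\<alpha> / c) / c)"
    by (rule mult_left_mono[OF le]) simp
  finally show ?thesis .
qed

lemma nn_integral_cone_kernel_time:
  assumes \<kappa>: "0 < \<kappa>" and \<beta>: "0 < \<beta>" and c: "c\<^sup>2 = \<kappa> * \<beta>"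
  shows "(\<integral>\<^sup>+r. indicator {0<..} r * (ennreal (L\<^sup>2 / (2 * pi * \<kappa>) * exp (- (\<beta> + w\<^sup>2 / \<kappa>) * r))
      * indicator {\<alpha>..} w) \<partial>lborel)
    = ennreal (L\<^sup>2 / (2 * pi)) * (ennreal (1 / (c\<^sup>2 + w\<^sup>2)) * indicator {\<alpha>..} w)"
proof -
  define A where "A = L\<^sup>2 / (2 * pi * \<kappa>)"
  have A: "0 \<le> A" using \<kappa> by (simp add: A_def)
  have pos: "0 < \<beta> + w\<^sup>2 / \<kappa>" using \<beta> \<kappa> by (simp add: add_pos_nonneg)
  have "(\<integral>\<^sup>+r. indicator {0<..} r * (ennreal (A * exp (- (\<beta> + w\<^sup>2 / \<kappa>) * r)) * indicator {\<alpha>..} w) \<partial>lborel)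
      = (\<integral>\<^sup>+r. (ennreal A * indicator {\<alpha>..} w) * (indicator {0<..} r * ennreal (exp (- (\<beta> + w\<^sup>2 / \<kappa>) * r)))
        \<partial>lborel)"
    using A by (intro nn_integral_cong) (simp add: ennreal_mult ac_simps)
  also have "\<dots> = (ennreal A * indicator {\<alpha>..} w)
      * (\<integral>\<^sup>+r. indicator {0<..} r * ennreal (exp (- (\<beta> + w\<^sup>2 / \<kappa>) * r)) \<partial>lborel)"
    by (rule nn_integral_cmult) simp
  also have "\<dots> = (ennreal A * indicator {\<alpha>..} w) * ennreal (1 / (\<beta> + w\<^sup>2 / \<kappa>))"
    by (simp only: nn_integral_exp_neg_mult[OF pos])
  also have "\<dots> = ennreal (L\<^sup>2 / (2 * pi)) * (ennreal (1 / (c\<^sup>2 + w\<^sup>2)) * indicator {\<alpha>..} w)"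
  proof -
    define X where "X = \<kappa> * \<beta> + w\<^sup>2"
    have X: "0 < X" using \<kappa> \<beta> by (simp add: add_pos_nonneg X_def)
    have "\<beta> + w\<^sup>2 / \<kappa> = X / \<kappa>" using \<kappa> by (simp add: field_simps X_def)
    then have "1 / (\<beta> + w\<^sup>2 / \<kappa>) = \<kappa> / X" by simp
    moreover have "L\<^sup>2 / (2 * pi * \<kappa>) * (\<kappa> / X) = L\<^sup>2 / (2 * pi) * (1 / X)"
      using \<kappa> X by (simp add: field_simps)
    ultimately have "A * (1 / (\<beta> + w\<^sup>2 / \<kappa>)) = L\<^sup>2 / (2 * pi) * (1 / (c\<^sup>2 + w\<^sup>2))"
      unfolding A_def X_def c by simp
    then show ?thesis using A pos by (simp add: ennreal_mult[symmetric] ac_simps indicator_def)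
  qed
  finally show ?thesis unfolding A_def .
qed

lemma one_less_nn_integral_cone_kernel:
  assumes \<kappa>: "0 < \<kappa>" and \<alpha>: "0 < \<alpha>" and \<beta>: "0 < \<beta>" and cond: "\<alpha>\<^sup>2 + \<kappa> * \<beta> < \<alpha> * L\<^sup>2 / (2 * pi)"
  shows "1 < (\<integral>\<^sup>+q. ennreal (cone_kernel L \<kappa> \<alpha> \<beta> q) \<partial>(lborel \<Otimes>\<^sub>M lborel))"
proof -
  define c where "c = sqrt (\<kappa> * \<beta>)"
  have c: "0 < c" "c\<^sup>2 = \<kappa> * \<beta>" using \<kappa> \<beta> by (simp_all add: c_def)
  define H where "H r w = indicator {0<..} r
      * (ennreal (L\<^sup>2 / (2 * pi * \<kappa>) * exp (- (\<beta> + w\<^sup>2 / \<kappa>) * r)) * indicator {\<alpha>..} w)" for r w :: real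
  have [measurable]: "case_prod H \<in> borel_measurable (lborel \<Otimes>\<^sub>M lborel)" unfolding H_def by measurable
  have time_integral: "(\<integral>\<^sup>+r. H r w \<partial>lborel)
      = ennreal (L\<^sup>2 / (2 * pi)) * (ennreal (1 / (c\<^sup>2 + w\<^sup>2)) * indicator {\<alpha>..} w)" for w
    unfolding H_def by (rule nn_integral_cone_kernel_time[OF \<kappa> \<beta> c(2)])
  have "ennreal (L\<^sup>2 / (2 * pi) * (pi / (2 * c) - arctan (\<alpha> / c) / c))
      = ennreal (L\<^sup>2 / (2 * pi)) * ennreal (pi / (2 * c) - arctan (\<alpha> / c) / c)"
    by (rule ennreal_mult') simp
  also have "\<dots> = (\<integral>\<^sup>+w. ennreal (L\<^sup>2 / (2 * pi)) * (ennreal (1 / (c\<^sup>2 + w\<^sup>2)) * indicator {\<alpha>..} w) \<partial>lborel)"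
    by (subst nn_integral_cmult) (auto simp: nn_integral_inverse_square_plus[OF c(1)])
  also have "\<dots> = (\<integral>\<^sup>+r. \<integral>\<^sup>+w. H r w \<partial>lborel \<partial>lborel)"
    unfolding time_integral[symmetric] by (rule lborel_pair.Fubini') measurable
  also have "\<dots> \<le> (\<integral>\<^sup>+r. \<integral>\<^sup>+z. ennreal (cone_kernel L \<kappa> \<alpha> \<beta> (r, z)) \<partial>lborel \<partial>lborel)"
  proof (rule nn_integral_mono)
    fix r :: real
    show "(\<integral>\<^sup>+w. H r w \<partial>lborel) \<le> (\<integral>\<^sup>+z. ennreal (cone_kernel L \<kappa> \<alpha> \<beta> (r, z)) \<partial>lborel)"
    proof (cases "0 < r")
      case True
      then show ?thesis unfolding nn_integral_cone_kernel_section[OF \<kappa> True] by (simp add: H_def)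
    qed (simp add: H_def)
  qed
  also have "\<dots> = (\<integral>\<^sup>+q. ennreal (cone_kernel L \<kappa> \<alpha> \<beta> q) \<partial>(lborel \<Otimes>\<^sub>M lborel))"
    by (rule lborel.nn_integral_fst) measurable
  finally have mass: "ennreal (L\<^sup>2 / (2 * pi) * (pi / (2 * c) - arctan (\<alpha> / c) / c))
      \<le> (\<integral>\<^sup>+q. ennreal (cone_kernel L \<kappa> \<alpha> \<beta> q) \<partial>(lborel \<Otimes>\<^sub>M lborel))" .
  have "1 < ennreal (L\<^sup>2 / (2 * pi) * (pi / (2 * c) - arctan (\<alpha> / c) / c))"
    using cone_kernel_mass_gt_1[OF \<kappa> \<alpha> \<beta> cond] unfolding c_def by simp
  then show ?thesis using mass by (rule less_le_trans)
qed

section \<open>The renewal inequality on the cone\<close>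

definition cone_weight :: "real \<Rightarrow> real \<Rightarrow> real \<times> real \<Rightarrow> real" where
  "cone_weight \<alpha> \<beta> z = (if 0 \<le> fst z \<and> \<alpha> * fst z \<le> \<bar>snd z\<bar> then exp (- \<beta> * fst z) else 0)"

lemma cone_weight_nonneg: "0 \<le> cone_weight \<alpha> \<beta> z"
  by (simp add: cone_weight_def)

lemma cone_weight_measurable[measurable]: "cone_weight \<alpha> \<beta> \<in> borel_measurable (lborel \<Otimes>\<^sub>M lborel)"
  unfolding cone_weight_def by measurable

lemma moment_kernel_zero_time: "moment_kernel L \<kappa> (0, x) w = 0"
  by (simp add: moment_kernel_def indicator_def heat_kernel_zero_time)

lemma cone_weight_reflect: "cone_weight \<alpha> \<beta> (t, - x) = cone_weight \<alpha> \<beta> (t, x)"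
  by (simp add: cone_weight_def)

lemma moment_kernel_reflect: "moment_kernel L \<kappa> (t, - x) (s, y) = moment_kernel L \<kappa> (t, x) (s, - y)"
  unfolding moment_kernel_def heat_kernel_def by (simp add: power2_eq_square algebra_simps)

lemma nn_integral_lborel_lborel_translate:
  fixes h :: "real \<times> real \<Rightarrow> ennreal"
  assumes "h \<in> borel_measurable (lborel \<Otimes>\<^sub>M lborel)"
  shows "(\<integral>\<^sup>+q. h q \<partial>(lborel \<Otimes>\<^sub>M lborel)) = (\<integral>\<^sup>+q. h (w + q) \<partial>(lborel \<Otimes>\<^sub>M lborel))"
proof -
  have h: "h \<in> borel_measurable borel" using assms by (simp add: lborel_prod)
  have "(\<integral>\<^sup>+q. h q \<partial>(lborel \<Otimes>\<^sub>M lborel)) = (\<integral>\<^sup>+q. h q \<partial>(distr lborel borel ((+) w)))"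
    by (simp add: lborel_prod lborel_distr_plus)
  also have "\<dots> = (\<integral>\<^sup>+q. h (w + q) \<partial>lborel)"
    by (rule nn_integral_distr) (auto simp: h)
  finally show ?thesis by (simp add: lborel_prod)
qed

lemma nn_integral_lborel_lborel_reflect:
  fixes h :: "real \<times> real \<Rightarrow> ennreal"
  assumes [measurable]: "h \<in> borel_measurable (lborel \<Otimes>\<^sub>M lborel)"
  shows "(\<integral>\<^sup>+q. h (fst q, - snd q) \<partial>(lborel \<Otimes>\<^sub>M lborel)) = (\<integral>\<^sup>+q. h q \<partial>(lborel \<Otimes>\<^sub>M lborel))"
proof -
  have "(\<integral>\<^sup>+z. h (r, - z) \<partial>lborel) = (\<integral>\<^sup>+z. h (r, z) \<partial>lborel)" for r
    using nn_integral_real_affine[of "\<lambda>z. h (r, z)" "-1" 0] by simp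
  then show ?thesis
    using lborel.nn_integral_fst[of "\<lambda>q. h (fst q, - snd q)"] lborel.nn_integral_fst[of h] by simp
qed

text \<open>A point of the cone \<open>{(s, y). \<alpha> s \<le> y}\<close> shifted by a point of the same cone stays in it:
  this is how the cone kernel sits inside the moment kernel.\<close>

lemma cone_kernel_le_moment_kernel_shift:
  assumes s: "0 \<le> s" and y: "\<alpha> * s \<le> y"
  shows "exp (- \<beta> * s) * cone_kernel L \<kappa> \<alpha> \<beta> q
    \<le> cone_weight \<alpha> \<beta> ((s, y) + q) * moment_kernel L \<kappa> ((s, y) + q) (s, y)"
proof -
  obtain r z where q: "q = (r, z)" by (cases q)
  show ?thesis
  proof (cases "0 < r \<and> \<alpha> * r \<le> z")
    case True
    then have "\<alpha> * (s + r) \<le> y + z" using y by (simp add: distrib_left)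
    then have "\<alpha> * (s + r) \<le> \<bar>y + z\<bar>" by linarith
    moreover have "exp (- \<beta> * (s + r)) = exp (- \<beta> * s) * exp (- \<beta> * r)"
      by (simp add: exp_add[symmetric] algebra_simps)
    ultimately show ?thesis
      using s True heat_kernel_minus[of \<kappa> r z]
      by (simp add: q cone_kernel_def cone_weight_def moment_kernel_def)
  next
    case False
    then have "cone_kernel L \<kappa> \<alpha> \<beta> q = 0"
      by (auto simp: q cone_kernel_def heat_kernel_zero_time)
    then show ?thesis by (simp add: cone_weight_nonneg moment_kernel_nonneg)
  qed
qed

lemma nn_integral_moment_kernel_reflect:
  "(\<integral>\<^sup>+z. ennreal (cone_weight \<alpha> \<beta> z * moment_kernel L \<kappa> z (s, - y)) \<partial>(lborel \<Otimes>\<^sub>M lborel))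
    = (\<integral>\<^sup>+z. ennreal (cone_weight \<alpha> \<beta> z * moment_kernel L \<kappa> z (s, y)) \<partial>(lborel \<Otimes>\<^sub>M lborel))"
proof -
  have "(\<lambda>z. ennreal (cone_weight \<alpha> \<beta> (fst z, - snd z) * moment_kernel L \<kappa> (fst z, - snd z) (s, - y)))
      = (\<lambda>z. ennreal (cone_weight \<alpha> \<beta> z * moment_kernel L \<kappa> z (s, y)))"
  proof
    fix z :: "real \<times> real"
    show "ennreal (cone_weight \<alpha> \<beta> (fst z, - snd z) * moment_kernel L \<kappa> (fst z, - snd z) (s, - y))
        = ennreal (cone_weight \<alpha> \<beta> z * moment_kernel L \<kappa> z (s, y))"
      by (cases z) (simp add: cone_weight_reflect moment_kernel_reflect)
  qed
  then have "(\<integral>\<^sup>+z. ennreal (cone_weight \<alpha> \<beta> z * moment_kernel L \<kappa> z (s, y)) \<partial>(lborel \<Otimes>\<^sub>M lborel))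
      = (\<integral>\<^sup>+z. ennreal (cone_weight \<alpha> \<beta> (fst z, - snd z) * moment_kernel L \<kappa> (fst z, - snd z) (s, - y))
          \<partial>(lborel \<Otimes>\<^sub>M lborel))"
    by simp
  also have "\<dots> = (\<integral>\<^sup>+z. ennreal (cone_weight \<alpha> \<beta> z * moment_kernel L \<kappa> z (s, - y)) \<partial>(lborel \<Otimes>\<^sub>M lborel))"
  proof (rule nn_integral_lborel_lborel_reflect)
    have "(\<lambda>z. moment_kernel L \<kappa> z (s, - y)) \<in> borel_measurable (lborel \<Otimes>\<^sub>M lborel)"
      by (rule moment_kernel_measurable_fst)
    then show "(\<lambda>z. ennreal (cone_weight \<alpha> \<beta> z * moment_kernel L \<kappa> z (s, - y)))
        \<in> borel_measurable (lborel \<Otimes>\<^sub>M lborel)" by simp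
  qed
  finally show ?thesis ..
qed

lemma exp_mult_cone_kernel_mass_le:
  assumes s: "0 \<le> s" and y: "\<alpha> * s \<le> y"
  shows "ennreal (exp (- \<beta> * s)) * (\<integral>\<^sup>+q. ennreal (cone_kernel L \<kappa> \<alpha> \<beta> q) \<partial>(lborel \<Otimes>\<^sub>M lborel))
    \<le> (\<integral>\<^sup>+z. ennreal (cone_weight \<alpha> \<beta> z * moment_kernel L \<kappa> z (s, y)) \<partial>(lborel \<Otimes>\<^sub>M lborel))"
proof -
  have "ennreal (exp (- \<beta> * s)) * (\<integral>\<^sup>+q. ennreal (cone_kernel L \<kappa> \<alpha> \<beta> q) \<partial>(lborel \<Otimes>\<^sub>M lborel))
      = (\<integral>\<^sup>+q. ennreal (exp (- \<beta> * s) * cone_kernel L \<kappa> \<alpha> \<beta> q) \<partial>(lborel \<Otimes>\<^sub>M lborel))"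
    by (subst nn_integral_cmult[symmetric]) (auto simp: ennreal_mult cone_kernel_nonneg intro!: nn_integral_cong)
  also have "\<dots> \<le> (\<integral>\<^sup>+q. ennreal (cone_weight \<alpha> \<beta> ((s, y) + q) * moment_kernel L \<kappa> ((s, y) + q) (s, y))
      \<partial>(lborel \<Otimes>\<^sub>M lborel))"
    by (intro nn_integral_mono ennreal_leI cone_kernel_le_moment_kernel_shift[OF s y])
  also have "\<dots> = (\<integral>\<^sup>+z. ennreal (cone_weight \<alpha> \<beta> z * moment_kernel L \<kappa> z (s, y)) \<partial>(lborel \<Otimes>\<^sub>M lborel))"
  proof (rule nn_integral_lborel_lborel_translate[symmetric])
    have "(\<lambda>z. moment_kernel L \<kappa> z (s, y)) \<in> borel_measurable (lborel \<Otimes>\<^sub>M lborel)"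
      by (rule moment_kernel_measurable_fst)
    then show "(\<lambda>z. ennreal (cone_weight \<alpha> \<beta> z * moment_kernel L \<kappa> z (s, y)))
        \<in> borel_measurable (lborel \<Otimes>\<^sub>M lborel)" by simp
  qed
  finally show ?thesis .
qed

lemma cone_weight_mult_cone_kernel_mass_le:
  "ennreal (cone_weight \<alpha> \<beta> w) * (\<integral>\<^sup>+q. ennreal (cone_kernel L \<kappa> \<alpha> \<beta> q) \<partial>(lborel \<Otimes>\<^sub>M lborel))
    \<le> (\<integral>\<^sup>+z. ennreal (cone_weight \<alpha> \<beta> z * moment_kernel L \<kappa> z w) \<partial>(lborel \<Otimes>\<^sub>M lborel))"
proof -
  obtain s y where w: "w = (s, y)" by (cases w)
  have "(0 \<le> s \<and> \<alpha> * s \<le> y) \<or> (0 \<le> s \<and> \<alpha> * s \<le> - y) \<or> cone_weight \<alpha> \<beta> w = 0"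
    by (auto simp: cone_weight_def w abs_if)
  then consider "0 \<le> s" "\<alpha> * s \<le> y" | "0 \<le> s" "\<alpha> * s \<le> - y" | "cone_weight \<alpha> \<beta> w = 0"
    by blast
  then show ?thesis
  proof cases
    case 1
    then have "cone_weight \<alpha> \<beta> w = exp (- \<beta> * s)" by (simp add: cone_weight_def w abs_if)
    then show ?thesis using exp_mult_cone_kernel_mass_le[of s \<alpha> y \<beta> L \<kappa>] 1 by (simp add: w)
  next
    case 2
    then have "cone_weight \<alpha> \<beta> w = exp (- \<beta> * s)" by (simp add: cone_weight_def w abs_if)
    then show ?thesis
      using exp_mult_cone_kernel_mass_le[of s \<alpha> "- y" \<beta> L \<kappa>] nn_integral_moment_kernel_reflect[of \<alpha> \<beta> L \<kappa> s y] 2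
      by (simp add: w)
  qed simp
qed

lemma cone_renewal_contraction:
  fixes G :: "real \<times> real \<Rightarrow> ennreal"
  assumes [measurable]: "G \<in> borel_measurable (lborel \<Otimes>\<^sub>M lborel)"
    and renewal: "\<And>t x. 0 < t \<Longrightarrow>
      (\<integral>\<^sup>+w. ennreal (moment_kernel L \<kappa> (t, x) w) * G w \<partial>(lborel \<Otimes>\<^sub>M lborel)) \<le> G (t, x)"
  shows "(\<integral>\<^sup>+q. ennreal (cone_kernel L \<kappa> \<alpha> \<beta> q) \<partial>(lborel \<Otimes>\<^sub>M lborel))
      * (\<integral>\<^sup>+z. ennreal (cone_weight \<alpha> \<beta> z) * G z \<partial>(lborel \<Otimes>\<^sub>M lborel))
    \<le> (\<integral>\<^sup>+z. ennreal (cone_weight \<alpha> \<beta> z) * G z \<partial>(lborel \<Otimes>\<^sub>M lborel))"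
    (is "?k * ?I \<le> ?I")
proof -
  interpret LL2: pair_sigma_finite "lborel \<Otimes>\<^sub>M lborel :: (real \<times> real) measure"
      "lborel \<Otimes>\<^sub>M lborel :: (real \<times> real) measure"
    unfolding pair_sigma_finite_def using sigma_finite_lborel_lborel by simp
  let ?LL = "lborel \<Otimes>\<^sub>M lborel :: (real \<times> real) measure"
  let ?CK = "\<lambda>z w. ennreal (cone_weight \<alpha> \<beta> z * moment_kernel L \<kappa> z w)"
  have "?k * ?I = (\<integral>\<^sup>+w. G w * (ennreal (cone_weight \<alpha> \<beta> w) * ?k) \<partial>?LL)"
    by (subst nn_integral_cmult[symmetric]) (auto simp: ac_simps)
  also have "\<dots> \<le> (\<integral>\<^sup>+w. G w * (\<integral>\<^sup>+z. ?CK z w \<partial>?LL) \<partial>?LL)"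
    by (intro nn_integral_mono mult_left_mono cone_weight_mult_cone_kernel_mass_le) simp
  also have "\<dots> = (\<integral>\<^sup>+w. \<integral>\<^sup>+z. ?CK z w * G w \<partial>?LL \<partial>?LL)"
  proof (rule nn_integral_cong)
    fix w :: "real \<times> real"
    have CK: "(\<lambda>z. ?CK z w) \<in> borel_measurable ?LL"
      using moment_kernel_measurable_fst[of L \<kappa> w] by measurable
    show "G w * (\<integral>\<^sup>+z. ?CK z w \<partial>?LL) = (\<integral>\<^sup>+z. ?CK z w * G w \<partial>?LL)"
      by (subst nn_integral_cmult[symmetric, OF CK]) (simp add: mult.commute)
  qed
  also have "\<dots> = (\<integral>\<^sup>+z. \<integral>\<^sup>+w. ?CK z w * G w \<partial>?LL \<partial>?LL)"
  proof -
    have "(\<lambda>p. ?CK (fst p) (snd p) * G (snd p)) \<in> borel_measurable (?LL \<Otimes>\<^sub>M ?LL)"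
      by measurable
    then show ?thesis by (intro LL2.Fubini') (simp add: case_prod_beta')
  qed
  also have "\<dots> = (\<integral>\<^sup>+z. ennreal (cone_weight \<alpha> \<beta> z)
      * (\<integral>\<^sup>+w. ennreal (moment_kernel L \<kappa> z w) * G w \<partial>?LL) \<partial>?LL)"
  proof (rule nn_integral_cong)
    fix z :: "real \<times> real"
    have "(\<lambda>w. ennreal (moment_kernel L \<kappa> z w) * G w) \<in> borel_measurable ?LL"
      using moment_kernel_measurable_snd[of L \<kappa> z] by measurable
    then show "(\<integral>\<^sup>+w. ?CK z w * G w \<partial>?LL)
        = ennreal (cone_weight \<alpha> \<beta> z) * (\<integral>\<^sup>+w. ennreal (moment_kernel L \<kappa> z w) * G w \<partial>?LL)"
      by (subst nn_integral_cmult[symmetric])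
        (simp_all add: ennreal_mult cone_weight_nonneg moment_kernel_nonneg mult.assoc)
  qed
  also have "\<dots> \<le> ?I"
  proof (rule nn_integral_mono)
    fix z :: "real \<times> real"
    obtain t x where z: "z = (t, x)" by (cases z)
    consider "t < 0" | "t = 0" | "0 < t" by linarith
    then show "ennreal (cone_weight \<alpha> \<beta> z) * (\<integral>\<^sup>+w. ennreal (moment_kernel L \<kappa> z w) * G w \<partial>?LL)
        \<le> ennreal (cone_weight \<alpha> \<beta> z) * G z"
    proof cases
      case 3
      then show ?thesis using renewal[of t x] by (simp add: z mult_left_mono)
    qed (simp_all add: z cone_weight_def moment_kernel_zero_time)
  qed
  finally show ?thesis .
qed

lemma ennreal_eq_0_of_mult_le_self:
  fixes I c :: ennreal
  assumes "I < \<infinity>" "1 < c" "c * I \<le> I"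
  shows "I = 0"
proof (rule ccontr)
  assume "I \<noteq> 0"
  obtain i where i: "I = ennreal i" "0 < i" using assms(1) \<open>I \<noteq> 0\<close> by (cases I) auto
  show False
  proof (cases c)
    case (real d)
    then have "d * i \<le> i" "1 < d" using assms(2,3) i by (auto simp: ennreal_mult[symmetric] ennreal_le_iff2)
    then show False using i(2) by (simp add: mult_le_cancel_right1 not_le)
  next
    case top
    then show False using assms(3) i by (simp add: ennreal_mult_eq_top_iff top_unique)
  qed
qed

lemma nn_integral_cone_weight_pos:
  fixes G :: "real \<times> real \<Rightarrow> ennreal"
  assumes [measurable]: "G \<in> borel_measurable (lborel \<Otimes>\<^sub>M lborel)"
    and \<alpha>: "0 < \<alpha>" and pos: "\<And>t x. 0 < t \<Longrightarrow> 0 < G (t, x)"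
  shows "(\<integral>\<^sup>+z. ennreal (cone_weight \<alpha> \<beta> z) * G z \<partial>(lborel \<Otimes>\<^sub>M lborel)) \<noteq> 0"
proof
  assume "(\<integral>\<^sup>+z. ennreal (cone_weight \<alpha> \<beta> z) * G z \<partial>(lborel \<Otimes>\<^sub>M lborel)) = 0"
  then have "AE z in lborel \<Otimes>\<^sub>M lborel. ennreal (cone_weight \<alpha> \<beta> z) * G z = 0"
    by (subst (asm) nn_integral_0_iff_AE) auto
  then obtain N where N: "{z \<in> space (lborel \<Otimes>\<^sub>M lborel). ennreal (cone_weight \<alpha> \<beta> z) * G z \<noteq> 0} \<subseteq> N"
    "emeasure (lborel \<Otimes>\<^sub>M lborel) N = 0" "N \<in> sets (lborel \<Otimes>\<^sub>M lborel)"
    by (rule AE_E)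
  define S where "S = {1<..2::real} \<times> {2 * \<alpha>..2 * \<alpha> + 1}"
  have "ennreal (cone_weight \<alpha> \<beta> z) * G z \<noteq> 0" if "z \<in> S" for z
  proof -
    obtain t x where z: "z = (t, x)" "0 < t" "t \<le> 2" "2 * \<alpha> \<le> x" using \<open>z \<in> S\<close> by (auto simp: S_def)
    have "\<alpha> * t \<le> \<alpha> * 2" using \<alpha> z by (intro mult_left_mono) auto
    then have "\<alpha> * t \<le> \<bar>x\<bar>" using z by linarith
    then show ?thesis using z pos[of t x] by (simp add: cone_weight_def)
  qed
  then have "S \<subseteq> N" using N(1) by (auto simp: space_pair_measure)
  then have "emeasure (lborel \<Otimes>\<^sub>M lborel) S = 0"
    using emeasure_mono[OF _ N(3)] N(2) by (metis le_zero_eq)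
  moreover have "emeasure (lborel \<Otimes>\<^sub>M lborel) S = 1"
    unfolding S_def by (subst lborel.emeasure_pair_measure_Times) auto
  ultimately show False by simp
qed

lemma nn_integral_cone_weight_infinite:
  fixes G :: "real \<times> real \<Rightarrow> ennreal"
  assumes [measurable]: "G \<in> borel_measurable (lborel \<Otimes>\<^sub>M lborel)"
    and \<kappa>: "0 < \<kappa>" and \<alpha>: "0 < \<alpha>" and \<beta>: "0 < \<beta>" and cond: "\<alpha>\<^sup>2 + \<kappa> * \<beta> < \<alpha> * L\<^sup>2 / (2 * pi)"
    and renewal: "\<And>t x. 0 < t \<Longrightarrow>
      (\<integral>\<^sup>+w. ennreal (moment_kernel L \<kappa> (t, x) w) * G w \<partial>(lborel \<Otimes>\<^sub>M lborel)) \<le> G (t, x)"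
    and pos: "\<And>t x. 0 < t \<Longrightarrow> 0 < G (t, x)"
  shows "(\<integral>\<^sup>+z. ennreal (cone_weight \<alpha> \<beta> z) * G z \<partial>(lborel \<Otimes>\<^sub>M lborel)) = \<infinity>"
proof (rule ccontr)
  assume "(\<integral>\<^sup>+z. ennreal (cone_weight \<alpha> \<beta> z) * G z \<partial>(lborel \<Otimes>\<^sub>M lborel)) \<noteq> \<infinity>"
  then have "(\<integral>\<^sup>+z. ennreal (cone_weight \<alpha> \<beta> z) * G z \<partial>(lborel \<Otimes>\<^sub>M lborel)) = 0"
    using one_less_nn_integral_cone_kernel[OF \<kappa> \<alpha> \<beta> cond] cone_renewal_contraction[OF _ renewal]
    by (intro ennreal_eq_0_of_mult_le_self) (auto simp: less_top)
  then show False using nn_integral_cone_weight_pos[of G, OF _ \<alpha> pos] by simp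
qed

lemma M_norm_eq_infinity_iff:
  assumes [measurable]: "second_moment M u \<in> borel_measurable (lborel \<Otimes>\<^sub>M lborel)"
  shows "M_norm M \<alpha> \<beta> u = \<infinity> \<longleftrightarrow>
    (\<integral>\<^sup>+z. ennreal (cone_weight \<alpha> \<beta> z) * second_moment M u z \<partial>(lborel \<Otimes>\<^sub>M lborel)) = \<infinity>"
proof -
  have "(\<integral>\<^sup>+ t. indicator {0..} t * ennreal (exp (- \<beta> * t)) *
      (\<integral>\<^sup>+ x. indicator {x. \<bar>x\<bar> \<ge> \<alpha> * t} x * (\<integral>\<^sup>+ \<omega>. ennreal ((u t x \<omega>)\<^sup>2) \<partial>M) \<partial>lborel) \<partial>lborel)
    = (\<integral>\<^sup>+t. \<integral>\<^sup>+x. ennreal (cone_weight \<alpha> \<beta> (t, x)) * second_moment M u (t, x) \<partial>lborel \<partial>lborel)"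
  proof (intro nn_integral_cong)
    fix t :: real
    show "indicator {0..} t * ennreal (exp (- \<beta> * t)) *
        (\<integral>\<^sup>+ x. indicator {x. \<bar>x\<bar> \<ge> \<alpha> * t} x * (\<integral>\<^sup>+ \<omega>. ennreal ((u t x \<omega>)\<^sup>2) \<partial>M) \<partial>lborel)
      = (\<integral>\<^sup>+x. ennreal (cone_weight \<alpha> \<beta> (t, x)) * second_moment M u (t, x) \<partial>lborel)"
    proof (cases "0 \<le> t")
      case True
      then have "indicator {0..} t * ennreal (exp (- \<beta> * t)) *
          (\<integral>\<^sup>+ x. indicator {x. \<bar>x\<bar> \<ge> \<alpha> * t} x * (\<integral>\<^sup>+ \<omega>. ennreal ((u t x \<omega>)\<^sup>2) \<partial>M) \<partial>lborel)
        = ennreal (exp (- \<beta> * t)) * (\<integral>\<^sup>+ x. indicator {x. \<bar>x\<bar> \<ge> \<alpha> * t} x * second_moment M u (t, x) \<partial>lborel)"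
        by (simp add: second_moment_def)
      also have "\<dots> = (\<integral>\<^sup>+ x. ennreal (exp (- \<beta> * t)) * (indicator {x. \<bar>x\<bar> \<ge> \<alpha> * t} x
          * second_moment M u (t, x)) \<partial>lborel)"
        by (rule nn_integral_cmult[symmetric]) measurable
      also have "\<dots> = (\<integral>\<^sup>+x. ennreal (cone_weight \<alpha> \<beta> (t, x)) * second_moment M u (t, x) \<partial>lborel)"
        using True by (intro nn_integral_cong) (simp add: cone_weight_def indicator_def)
      finally show ?thesis .
    qed (simp add: cone_weight_def)
  qed
  also have "\<dots> = (\<integral>\<^sup>+z. ennreal (cone_weight \<alpha> \<beta> z) * second_moment M u z \<partial>(lborel \<Otimes>\<^sub>M lborel))"
    by (rule lborel.nn_integral_fst[where f="\<lambda>z. ennreal (cone_weight \<alpha> \<beta> z) * second_moment M u z",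
          simplified]) measurable
  finally show ?thesis unfolding M_norm_def Let_def by simp
qed

lemma cone_condition_iff:
  "(\<alpha> - L\<^sup>2 / (4 * pi))\<^sup>2 < L^4 / (16 * pi\<^sup>2) - \<kappa> * \<beta> \<longleftrightarrow> \<alpha>\<^sup>2 + \<kappa> * \<beta> < \<alpha> * L\<^sup>2 / (2 * pi)"
proof -
  have "(\<alpha> - L\<^sup>2 / (4 * pi))\<^sup>2 = \<alpha>\<^sup>2 - \<alpha> * L\<^sup>2 / (2 * pi) + L^4 / (16 * pi\<^sup>2)"
    by (simp add: power2_diff power_divide field_simps power2_eq_square eval_nat_numeral)
  then show ?thesis by auto
qed

lemma (in white_noise_space) second_moment_pos:
  assumes sol: "mild_solution M F W \<kappa> \<sigma> u0 u" and \<sigma>: "\<sigma> \<in> borel_measurable borel"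
    and \<kappa>: "0 < \<kappa>" and t: "0 < t" and "\<And>y. 0 \<le> u0 y" "u0 \<in> borel_measurable borel"
    and "bounded (range u0)" "emeasure lborel {y. u0 y > 0} > 0"
  shows "0 < second_moment M u (t, x)"
proof -
  have "0 < heat_semigroup \<kappa> t u0 x" using heat_semigroup_pos[OF \<kappa> t assms(5-)] .
  then have "0 < ennreal ((heat_semigroup \<kappa> t u0 x)\<^sup>2)" by simp
  then show ?thesis using second_moment_ge_heat_semigroup[OF sol \<sigma> t] by (rule less_le_trans)
qed

theorem proposition4p2:
  fixes M :: "'a measure" and F :: "real \<Rightarrow> 'a measure"
    and W :: "(real \<times> real) set \<Rightarrow> 'a \<Rightarrow> real"
    and \<kappa> \<alpha> \<beta> :: real and \<sigma> u0 :: "real \<Rightarrow> real"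
    and u :: "real \<Rightarrow> real \<Rightarrow> 'a \<Rightarrow> real"
  assumes noise: "white_noise M F W"
    and kappa_pos: "\<kappa> > 0"
    and sigma_lip: "\<exists>L. L-lipschitz_on UNIV \<sigma>"
    and sigma_zero: "\<sigma> 0 = 0"
    and L_pos: "L_sigma \<sigma> > 0"
    and u0_nonneg: "\<forall>x. u0 x \<ge> 0"
    and u0_bounded: "bounded (range u0)"
    and u0_lsc: "lsc u0"
    and u0_pos: "emeasure lborel {x. u0 x > 0} > 0"
    and sol: "mild_solution M F W \<kappa> \<sigma> u0 u"
    and ab_pos: "\<alpha> > 0" "\<beta> > 0"
    and ab: "(\<alpha> - (L_sigma \<sigma>)\<^sup>2 / (4 * pi))\<^sup>2 < (L_sigma \<sigma>)^4 / (16 * pi\<^sup>2) - \<kappa> * \<beta>"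
  shows "M_norm M \<alpha> \<beta> u = \<infinity>"
proof -
  have "prob_space M" using noise by (simp add: white_noise_def)
  then interpret white_noise_space M F W
    using noise by (intro white_noise_space.intro white_noise_space_axioms.intro)
  have \<sigma>: "\<sigma> \<in> borel_measurable borel" using lipschitz_borel_measurable[OF sigma_lip] .
  have "predictable M F u" using sol by (simp add: mild_solution_def)
  then have G: "second_moment M u \<in> borel_measurable (lborel \<Otimes>\<^sub>M lborel)"
    by (rule second_moment_measurable)
  have "(\<integral>\<^sup>+z. ennreal (cone_weight \<alpha> \<beta> z) * second_moment M u z \<partial>(lborel \<Otimes>\<^sub>M lborel)) = \<infinity>"
  proof (rule nn_integral_cone_weight_infinite[OF G kappa_pos ab_pos])
    show "\<alpha>\<^sup>2 + \<kappa> * \<beta> < \<alpha> * (L_sigma \<sigma>)\<^sup>2 / (2 * pi)" using ab cone_condition_iff by blast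
    show "(\<integral>\<^sup>+w. ennreal (moment_kernel (L_sigma \<sigma>) \<kappa> (t, x) w) * second_moment M u w \<partial>(lborel \<Otimes>\<^sub>M lborel))
        \<le> second_moment M u (t, x)" if "0 < t" for t x
      using second_moment_ge_renewal[OF sol \<sigma> L_sigma_mult_abs_le[of \<sigma>, OF sigma_zero] L_sigma_nonneg that] .
    show "0 < second_moment M u (t, x)" if "0 < t" for t x
      using second_moment_pos[OF sol \<sigma> kappa_pos that _ lsc_borel_measurable[OF u0_lsc] u0_bounded u0_pos]
        u0_nonneg by blast
  qed
  then show ?thesis using M_norm_eq_infinity_iff[OF G] by simp
qed

end
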